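(* Let $M$ be an entire graph in $\mathbf H^{p,q}_+$ and let $\partial^+_\infty M$ denote its asymptotic boundary. The following are equivalent: (1) $\partial^+_\infty M$ is not admissible; (2) $M$ contains a complete lightlike geodesic; (3) $M$ is foliated by complete lightlike geodesics; (4) in every Fermi chart, $M$ is the graph of a $1$-Lipschitz map $\varphi:\mathbf S^p_+\to\mathbf S^q$ of the form $$\varphi(\sin(t)u_0+\cos(t)v)=\sin(t)w_0+\cos(t)\,\overline\varphi(v),\qquad t\in(-\pi/2,\pi/2),$$ for some $u_0\in\mathbf S^{p-1}$, $w_0\in\mathbf S^q$ and some $1$-Lipschitz map $\overline\varphi$ from the hemisphere $u_0^\perp\cap\mathbf S^p_+$ to the $(q-1)$-sphere $w_0^\perp\cap\mathbf S^q$.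
   Context: $E$ is a real vector space of dimension $p+q+1$ with a non-degenerate symmetric bilinear form $\mathbf b$ of signature $(p,q+1)$; $\mathbf H^{p,q}_+$ is the set of oriented lines with $\mathbf b(x,x)<0$, identified with the quadric $\{\mathbf b(x,x)=-1\}$ with induced metric of signature $(p,q)$; $\partial_\infty\mathbf H^{p,q}_+$ is the space of oriented isotropic lines. Fermi chart: for a $\mathbf b$-orthogonal decomposition $E=\ell\oplus U\oplus V$ ($\ell$ an oriented negative line, $U$ positive definite, $\dim U=p$), let $W=\ell\oplus V$, $\mathbf S^q=\{w\in W:\mathbf b(w,w)=-1\}$, $\mathbf B^p$ the unit ball of $U$; let $\mathbf S^p$ be the unit sphere of $\ell\oplus U$ for the positive form that reverses the sign of $\mathbf b$ on $\ell$, $\mathbf S^p_+$ its open upper hemisphere with equator $\mathbf S^{p-1}$ (the unit sphere of $U$), closure $\overline{\mathbf S}{}^p_+$, and $\sigma$ stereographic projection onto $\mathbf B^p$; all spheres carry round metrics, and $u_0^\perp$, $w_0^\perp$ refer to the corresponding Euclidean inner products. The chart $\Psi(u,w)=\big[\tfrac{2\sigma(u)+(1+\|\sigma(u)\|^2)w}{1-\|\sigma(u)\|^2}\big]$ identifies $\mathbf S^p_+\times\mathbf S^q$ with $\mathbf H^{p,q}_+$, and $(u,w)\mapsto[u+w]$ identifies $\mathbf S^{p-1}\times\mathbf S^q$ with $\partial_\infty\mathbf H^{p,q}_+$. An entire graph is a subset equal to $\{\Psi(u,\varphi(u))\}$ for a $1$-Lipschitz $\varphi:\mathbf S^p_+\to\mathbf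 S^q$ in some (equivalently every) Fermi chart; its asymptotic boundary is $\{[u+\overline\varphi(u)]:u\in\mathbf S^{p-1}\}$ where $\overline\varphi$ is the continuous extension of $\varphi$ to $\overline{\mathbf S}{}^p_+$; this is a non-negative $(p-1)$-sphere. A non-negative sphere is admissible if it contains no two points that are the same line with opposite orientations. *)

theory Defs
  imports "HOL-Analysis.Analysis"
begin

text \<open>E is modelled as a Euclidean space of dimension p+q+1 (only its linear
structure and topology are used), equipped with an abstract symmetric bilinear form b.\<close>

definition symmetric_bilinear :: "('a::real_vector \<Rightarrow> 'a \<Rightarrow> real) \<Rightarrow> bool" where
  "symmetric_bilinear b \<longleftrightarrow> bilinear b \<and> (\<forall>x y. b x y = b y x)"

definition nondegenerate :: "('a::real_vector \<Rightarrow> 'a \<Rightarrow> real) \<Rightarrow> bool" where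
  "nondegenerate b \<longleftrightarrow> (\<forall>x. (\<forall>y. b x y = 0) \<longrightarrow> x = 0)"

definition pos_def_on :: "('a::real_vector \<Rightarrow> 'a \<Rightarrow> real) \<Rightarrow> 'a set \<Rightarrow> bool" where
  "pos_def_on b S \<longleftrightarrow> (\<forall>x\<in>S. x \<noteq> 0 \<longrightarrow> b x x > 0)"

definition neg_def_on :: "('a::real_vector \<Rightarrow> 'a \<Rightarrow> real) \<Rightarrow> 'a set \<Rightarrow> bool" where
  "neg_def_on b S \<longleftrightarrow> (\<forall>x\<in>S. x \<noteq> 0 \<longrightarrow> b x x < 0)"

definition has_signature :: "('a::euclidean_space \<Rightarrow> 'a \<Rightarrow> real) \<Rightarrow> nat \<Rightarrow> nat \<Rightarrow> bool" where
  "has_signature b r s \<longleftrightarrow> nondegenerate b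
     \<and> (\<exists>U. subspace U \<and> dim U = r \<and> pos_def_on b U)
     \<and> (\<forall>U. subspace U \<and> pos_def_on b U \<longrightarrow> dim U \<le> r)
     \<and> (\<exists>V. subspace V \<and> dim V = s \<and> neg_def_on b V)
     \<and> (\<forall>V. subspace V \<and> neg_def_on b V \<longrightarrow> dim V \<le> s)"

text \<open>H^{p,q}_+ in its quadric model {b(x,x) = -1}.\<close>
definition Hpq :: "('a::real_vector \<Rightarrow> 'a \<Rightarrow> real) \<Rightarrow> 'a set" where
  "Hpq b = {x. b x x = -1}"

text \<open>Points of the boundary: oriented isotropic lines, represented as open rays.\<close>
definition ray :: "'a::real_vector \<Rightarrow> 'a set" where
  "ray x = {c *\<^sub>R x | c. c > 0}"

definition admissible :: "'a::real_vector set set \<Rightarrow> bool" where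
  "admissible \<Lambda> \<longleftrightarrow> \<not> (\<exists>x. x \<noteq> 0 \<and> ray x \<in> \<Lambda> \<and> ray (- x) \<in> \<Lambda>)"

text \<open>A Fermi chart is given by e0 (the unit vector, b(e0,e0) = -1, spanning and orienting
the negative line l), and subspaces U, V with E = l + U + V b-orthogonal, U positive definite
of dimension p.\<close>
definition fermi_chart :: "('a::euclidean_space \<Rightarrow> 'a \<Rightarrow> real) \<Rightarrow> nat \<Rightarrow> 'a \<Rightarrow> 'a set \<Rightarrow> 'a set \<Rightarrow> bool" where
  "fermi_chart b p e0 U V \<longleftrightarrow> b e0 e0 = -1 \<and> subspace U \<and> subspace V \<and> dim U = p
     \<and> pos_def_on b U
     \<and> (\<forall>u\<in>U. b e0 u = 0) \<and> (\<forall>v\<in>V. b e0 v = 0) \<and> (\<forall>u\<in>U. \<forall>v\<in>V. b u v = 0)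
     \<and> (\<forall>x. \<exists>a u v. u \<in> U \<and> v \<in> V \<and> x = a *\<^sub>R e0 + u + v)"

text \<open>Euclidean inner product on l + U (sign of b reversed on l), and on W = l + V (= -b).\<close>
definition ipS :: "('a::real_vector \<Rightarrow> 'a \<Rightarrow> real) \<Rightarrow> 'a \<Rightarrow> 'a \<Rightarrow> 'a \<Rightarrow> real" where
  "ipS b e0 x y = b x y + 2 * b x e0 * b y e0"

definition ipW :: "('a::real_vector \<Rightarrow> 'a \<Rightarrow> real) \<Rightarrow> 'a \<Rightarrow> 'a \<Rightarrow> real" where
  "ipW b x y = - b x y"

definition Sp :: "('a::real_vector \<Rightarrow> 'a \<Rightarrow> real) \<Rightarrow> 'a \<Rightarrow> 'a set \<Rightarrow> 'a set" where
  "Sp b e0 U = {x. (\<exists>a u. u \<in> U \<and> x = a *\<^sub>R e0 + u) \<and> ipS b e0 x x = 1}"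

text \<open>Open upper hemisphere: positive l-component, i.e. -b(x,e0) > 0.\<close>
definition Sp_plus :: "('a::real_vector \<Rightarrow> 'a \<Rightarrow> real) \<Rightarrow> 'a \<Rightarrow> 'a set \<Rightarrow> 'a set" where
  "Sp_plus b e0 U = {x \<in> Sp b e0 U. b x e0 < 0}"

definition equator :: "('a::real_vector \<Rightarrow> 'a \<Rightarrow> real) \<Rightarrow> 'a set \<Rightarrow> 'a set" where
  "equator b U = {u \<in> U. b u u = 1}"

definition Sq :: "('a::real_vector \<Rightarrow> 'a \<Rightarrow> real) \<Rightarrow> 'a \<Rightarrow> 'a set \<Rightarrow> 'a set" where
  "Sq b e0 V = {w. (\<exists>a v. v \<in> V \<and> w = a *\<^sub>R e0 + v) \<and> b w w = -1}"

text \<open>Stereographic projection S^p_+ -> B^p (from the pole -e0):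
  a e0 + x  |->  x / (1 + a).\<close>
definition stereo :: "('a::real_vector \<Rightarrow> 'a \<Rightarrow> real) \<Rightarrow> 'a \<Rightarrow> 'a \<Rightarrow> 'a" where
  "stereo b e0 u = (1 / (1 - b u e0)) *\<^sub>R (u + b u e0 *\<^sub>R e0)"

definition Psi :: "('a::real_vector \<Rightarrow> 'a \<Rightarrow> real) \<Rightarrow> 'a \<Rightarrow> 'a \<Rightarrow> 'a \<Rightarrow> 'a" where
  "Psi b e0 u w = (let s = stereo b e0 u; n = b s s
                   in (1 / (1 - n)) *\<^sub>R (2 *\<^sub>R s + (1 + n) *\<^sub>R w))"

text \<open>1-Lipschitz for the round metrics (angular distance) of the unit spheres.\<close>
definition lip1 :: "('a \<Rightarrow> 'a \<Rightarrow> real) \<Rightarrow> ('b \<Rightarrow> 'b \<Rightarrow> real) \<Rightarrow> 'a set \<Rightarrow> ('a \<Rightarrow> 'b) \<Rightarrow> bool" where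
  "lip1 ip1 ip2 S f \<longleftrightarrow> (\<forall>x\<in>S. \<forall>y\<in>S. arccos (ip2 (f x) (f y)) \<le> arccos (ip1 x y))"

definition graph_map :: "('a::real_vector \<Rightarrow> 'a \<Rightarrow> real) \<Rightarrow> 'a \<Rightarrow> 'a set \<Rightarrow> 'a set \<Rightarrow> ('a \<Rightarrow> 'a) \<Rightarrow> bool" where
  "graph_map b e0 U V \<phi> \<longleftrightarrow> \<phi> ` Sp_plus b e0 U \<subseteq> Sq b e0 V
      \<and> lip1 (ipS b e0) (ipW b) (Sp_plus b e0 U) \<phi>"

definition graph_of :: "('a::real_vector \<Rightarrow> 'a \<Rightarrow> real) \<Rightarrow> 'a \<Rightarrow> 'a set \<Rightarrow> ('a \<Rightarrow> 'a) \<Rightarrow> 'a set" where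
  "graph_of b e0 U \<phi> = (\<lambda>u. Psi b e0 u (\<phi> u)) ` Sp_plus b e0 U"

definition entire_graph_in :: "('a::euclidean_space \<Rightarrow> 'a \<Rightarrow> real) \<Rightarrow> nat \<Rightarrow> 'a \<Rightarrow> 'a set \<Rightarrow> 'a set
      \<Rightarrow> ('a \<Rightarrow> 'a) \<Rightarrow> 'a set \<Rightarrow> bool" where
  "entire_graph_in b p e0 U V \<phi> M \<longleftrightarrow> fermi_chart b p e0 U V \<and> graph_map b e0 U V \<phi>
      \<and> M = graph_of b e0 U \<phi>"

definition ext_map :: "('a::euclidean_space \<Rightarrow> 'a \<Rightarrow> real) \<Rightarrow> 'a \<Rightarrow> 'a set \<Rightarrow> ('a \<Rightarrow> 'a) \<Rightarrow> 'a \<Rightarrow> 'a" where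
  "ext_map b e0 U \<phi> u = (if u \<in> Sp_plus b e0 U then \<phi> u else Lim (at u within Sp_plus b e0 U) \<phi>)"

definition asym_boundary :: "('a::euclidean_space \<Rightarrow> 'a \<Rightarrow> real) \<Rightarrow> 'a \<Rightarrow> 'a set \<Rightarrow> ('a \<Rightarrow> 'a) \<Rightarrow> 'a set set" where
  "asym_boundary b e0 U \<phi> = {ray (u + ext_map b e0 U \<phi> u) | u. u \<in> equator b U}"

text \<open>A complete lightlike geodesic of the quadric: a curve defined on all of R, lying in the
quadric, whose ambient acceleration is normal to the quadric (normal space at x = span {x}),
with nonzero isotropic velocity.\<close>
definition complete_lightlike_geodesic :: "('a::euclidean_space \<Rightarrow> 'a \<Rightarrow> real) \<Rightarrow> (real \<Rightarrow> 'a) \<Rightarrow> bool" where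
  "complete_lightlike_geodesic b \<gamma> \<longleftrightarrow> (\<exists>\<gamma>' \<gamma>''. \<forall>t.
      (\<gamma> has_vector_derivative \<gamma>' t) (at t) \<and> (\<gamma>' has_vector_derivative \<gamma>'' t) (at t)
      \<and> \<gamma> t \<in> Hpq b \<and> \<gamma>'' t \<in> span {\<gamma> t} \<and> b (\<gamma>' t) (\<gamma>' t) = 0 \<and> \<gamma>' t \<noteq> 0)"

definition contains_lightlike_geodesic :: "('a::euclidean_space \<Rightarrow> 'a \<Rightarrow> real) \<Rightarrow> 'a set \<Rightarrow> bool" where
  "contains_lightlike_geodesic b M \<longleftrightarrow> (\<exists>\<gamma>. complete_lightlike_geodesic b \<gamma> \<and> range \<gamma> \<subseteq> M)"

definition foliated_by_lightlike_geodesics :: "('a::euclidean_space \<Rightarrow> 'a \<Rightarrow> real) \<Rightarrow> 'a set \<Rightarrow> bool" where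
  "foliated_by_lightlike_geodesics b M \<longleftrightarrow> (\<exists>F. (\<forall>L\<in>F. \<exists>\<gamma>. complete_lightlike_geodesic b \<gamma> \<and> L = range \<gamma>)
      \<and> (\<forall>L\<in>F. \<forall>L'\<in>F. L \<noteq> L' \<longrightarrow> L \<inter> L' = {}) \<and> \<Union>F = M)"

definition split_form_in :: "('a::euclidean_space \<Rightarrow> 'a \<Rightarrow> real) \<Rightarrow> 'a \<Rightarrow> 'a set \<Rightarrow> 'a set \<Rightarrow> 'a set \<Rightarrow> bool" where
  "split_form_in b e0 U V M \<longleftrightarrow> (\<exists>\<phi>. graph_map b e0 U V \<phi> \<and> M = graph_of b e0 U \<phi>
     \<and> (\<exists>u0 w0 \<psi>. u0 \<in> equator b U \<and> w0 \<in> Sq b e0 V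
         \<and> \<psi> ` {v \<in> Sp_plus b e0 U. ipS b e0 u0 v = 0} \<subseteq> {w \<in> Sq b e0 V. ipW b w0 w = 0}
         \<and> lip1 (ipS b e0) (ipW b) {v \<in> Sp_plus b e0 U. ipS b e0 u0 v = 0} \<psi>
         \<and> (\<forall>t v. - (pi/2) < t \<and> t < pi/2 \<and> v \<in> Sp_plus b e0 U \<and> ipS b e0 u0 v = 0 \<longrightarrow>
               \<phi> (sin t *\<^sub>R u0 + cos t *\<^sub>R v) = sin t *\<^sub>R w0 + cos t *\<^sub>R \<psi> v)))"

end

(*
  Fix a Fermi chart, so that E splits b-orthogonally into the positive definite U and the
  negative definite W = span (e0, V). The graph M of a 1-Lipschitz map is achronal,
  b(P, Q) <= -1 for P, Q in M, and it is maximal: a point of the quadric over the same point of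
  U as a point of M, and achronal to it, lies in M. A complete lightlike geodesic is an affine
  line P + t v with v isotropic. If M contains one, achronality forces b(Q, v) = 0 on M, and
  maximality then makes M invariant under all translations by v, so M is foliated by parallel
  lightlike lines. Writing v = c (u0 + w0) with u0 on the equator and w0 in S^q, these
  translations act in the chart as rotations towards u0 and towards w0, which is the split
  form; its boundary map sends u0 to w0 and -u0 to -w0, so the boundary contains opposite
  points. Conversely, opposite boundary points [u + w] and [-u - w] make the 1-Lipschitz bound
  sharp along the meridian through u, which then is the lightlike line phi(e0) + r (u + w).
  The split form holds in every Fermi chart because M is an entire graph in every chart: the
  projection to the new U is injective on M by achronality and proper, hence onto by
  invariance of domain.
*)
theory Submission
  imports Defs "HOL-Homology.Invariance_of_Domain"
begin

lemma tendsto_great_circle_at_left: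
  "((\<lambda>t. sin t *\<^sub>R u + cos t *\<^sub>R v) \<longlongrightarrow> (u::'a::real_normed_vector)) (at_left (pi / 2))"
proof -
  have "((\<lambda>t. sin t *\<^sub>R u + cos t *\<^sub>R v) \<longlongrightarrow> sin (pi / 2) *\<^sub>R u + cos (pi / 2) *\<^sub>R v) (at (pi / 2))"
    by (intro tendsto_intros tendsto_ident_at)
  hence "((\<lambda>t. sin t *\<^sub>R u + cos t *\<^sub>R v) \<longlongrightarrow> u) (at (pi / 2))" by simp
  thus ?thesis by (rule tendsto_within_subset) simp
qed

lemma eventually_at_left_half_pi: "eventually (\<lambda>t. 0 < t \<and> t < pi / 2) (at_left (pi / 2))"
  using eventually_at_left_real[of 0 "pi / 2"] by simp

lemma ray_eq_imp_pos_multiple: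
  assumes "ray x = ray y" "y \<noteq> 0" shows "\<exists>c>0. y = c *\<^sub>R x"
proof -
  have "y \<in> ray y" by (auto simp: ray_def intro!: exI[of _ 1])
  thus ?thesis using assms(1) by (auto simp: ray_def)
qed

lemma closed_image_if_bounded_sublevels:
  fixes g :: "'a::euclidean_space \<Rightarrow> 'b::euclidean_space"
  assumes "closed S" "continuous_on S g" "\<And>r. bounded {x \<in> S. norm (g x) \<le> r}"
  shows "closed (g ` S)"
proof -
  have "l \<in> g ` S" if "l \<in> closure (g ` S)" for l
  proof -
    define K where "K = {x \<in> S. norm (g x) \<le> norm l + 1}"
    have "closed (S \<inter> (\<lambda>x. norm (g x)) -` {..norm l + 1})"
      using assms(1,2) by (intro continuous_closed_preimage continuous_intros) auto
    moreover have "S \<inter> (\<lambda>x. norm (g x)) -` {..norm l + 1} = K" by (auto simp: K_def)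
    ultimately have "closed K" by simp
    moreover have "bounded K" "K \<subseteq> S" using assms(3) by (auto simp: K_def)
    ultimately have "compact (g ` K)"
      using compact_continuous_image continuous_on_subset[OF assms(2)] compact_eq_bounded_closed
      by blast
    moreover have "ball 0 (norm l + 1) \<inter> g ` S \<subseteq> g ` K" by (auto simp: K_def)
    hence "closure (ball 0 (norm l + 1) \<inter> g ` S) \<subseteq> closure (g ` K)" by (rule closure_mono)
    moreover have "l \<in> closure (ball 0 (norm l + 1) \<inter> g ` S)"
      using open_Int_closure_subset[OF open_ball, of 0 "norm l + 1" "g ` S"] that by auto
    ultimately have "l \<in> g ` K" using compact_imp_closed closure_closed by blast
    thus ?thesis by (auto simp: K_def)
  qed
  thus ?thesis by (auto simp: closure_subset_eq[symmetric])
qed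

lemma parallel_lines_partition:
  fixes v :: "'a::real_vector"
  assumes invariant: "\<And>Q t. Q \<in> S \<Longrightarrow> Q + t *\<^sub>R v \<in> S"
  defines "line \<equiv> \<lambda>Q. range (\<lambda>t. Q + t *\<^sub>R v)"
  shows "\<Union> (line ` S) = S" and "\<forall>L\<in>line ` S. \<forall>L'\<in>line ` S. L \<noteq> L' \<longrightarrow> L \<inter> L' = {}"
proof -
  have on_line: "Q \<in> line Q" for Q by (auto simp: line_def intro: range_eqI[of _ _ 0])
  have line_through: "line Q = line x" if x: "x \<in> line Q" for x Q
  proof -
    obtain c where c: "x = Q + c *\<^sub>R v" using x by (auto simp: line_def)
    have "Q + t *\<^sub>R v = x + (t - c) *\<^sub>R v" "x + t *\<^sub>R v = Q + (t + c) *\<^sub>R v" for t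
      by (simp_all add: c algebra_simps)
    thus ?thesis unfolding line_def by (metis (no_types, lifting) rangeE rangeI subset_antisym subsetI)
  qed
  show "\<Union> (line ` S) = S" using invariant on_line by (auto simp: line_def)
  show "\<forall>L\<in>line ` S. \<forall>L'\<in>line ` S. L \<noteq> L' \<longrightarrow> L \<inter> L' = {}"
  proof (intro ballI impI)
    fix L L' assume "L \<in> line ` S" "L' \<in> line ` S" "L \<noteq> L'"
    then obtain Q Q' where Q: "L = line Q" "L' = line Q'" "line Q \<noteq> line Q'" by blast
    show "L \<inter> L' = {}"
    proof (rule ccontr)
      assume "L \<inter> L' \<noteq> {}"
      then obtain x where "x \<in> line Q" "x \<in> line Q'" using Q by blast
      thus False using line_through Q(3) by metis
    qed
  qed
qed

lemma image_eq_if_closed_inj_on_subspace: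
  fixes g :: "'a::euclidean_space \<Rightarrow> 'b::euclidean_space"
  assumes "subspace U" "subspace U1" "dim U1 \<le> dim U"
    and "continuous_on U g" "g \<in> U \<rightarrow> U1" "inj_on g U" "closed (g ` U)"
  shows "g ` U = U1"
proof -
  have "openin (top_of_set U1) (g ` U)"
    by (rule invariance_of_domain_subspaces[OF openin_subtopology_self assms(1-6)])
  moreover have "closedin (top_of_set U1) (g ` U)" using assms(5,7) by (intro closed_subset) auto
  moreover have "connected U1" using convex_connected subspace_imp_convex assms(2) by blast
  ultimately have "g ` U = {} \<or> g ` U = U1" by (intro connected_clopen[THEN iffD1, rule_format] conjI)
  thus ?thesis using subspace_0[OF assms(1)] by blast
qed

section \<open>Symmetric bilinear forms and lightlike lines\<close>

locale symmetric_form =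
  fixes b :: "'a::euclidean_space \<Rightarrow> 'a \<Rightarrow> real"
  assumes symmetric_bilinear: "symmetric_bilinear b"
begin

lemma commute: "b x y = b y x"
  using symmetric_bilinear by (simp add: symmetric_bilinear_def)

lemma bounded_bilinear: "bounded_bilinear b"
  using symmetric_bilinear bilinear_conv_bounded_bilinear by (auto simp: symmetric_bilinear_def)

lemmas add_left = bounded_bilinear.add_left[OF bounded_bilinear]
  and add_right = bounded_bilinear.add_right[OF bounded_bilinear]
  and diff_left = bounded_bilinear.diff_left[OF bounded_bilinear]
  and diff_right = bounded_bilinear.diff_right[OF bounded_bilinear]
  and scaleR_left = bounded_bilinear.scaleR_left[OF bounded_bilinear]
  and scaleR_right = bounded_bilinear.scaleR_right[OF bounded_bilinear]
  and minus_left = bounded_bilinear.minus_left[OF bounded_bilinear]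
  and minus_right = bounded_bilinear.minus_right[OF bounded_bilinear]
  and zero_left = bounded_bilinear.zero_left[OF bounded_bilinear]
  and zero_right = bounded_bilinear.zero_right[OF bounded_bilinear]

lemmas bilinear_simps = add_left add_right diff_left diff_right scaleR_left scaleR_right
  minus_left minus_right zero_left zero_right

lemmas tendsto = bounded_bilinear.tendsto[OF bounded_bilinear]
  and continuous_on = bounded_bilinear.continuous_on[OF bounded_bilinear]

lemma has_real_derivative:
  "(f has_vector_derivative f') (at t) \<Longrightarrow> (g has_vector_derivative g') (at t) \<Longrightarrow>
   ((\<lambda>t. b (f t) (g t)) has_real_derivative (b (f t) g' + b f' (g t))) (at t)"
  using bounded_bilinear.has_vector_derivative[OF bounded_bilinear, of f f' t UNIV g g']
  by (simp add: has_real_derivative_iff_has_vector_derivative)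

lemma orthogonal_if_isotropic_in_nonpos_plane:
  assumes nonpos: "\<And>t. b (x + t *\<^sub>R y) (x + t *\<^sub>R y) \<le> 0" and isotropic: "b x x = 0"
  shows "b x y = 0"
proof (rule ccontr)
  assume ne: "b x y \<noteq> 0"
  let ?B = "b x y" and ?C = "b y y"
  have quad: "b (x + t *\<^sub>R y) (x + t *\<^sub>R y) = 2 * t * ?B + t * t * ?C" for t
    using isotropic by (simp add: bilinear_simps commute[of y x] algebra_simps)
  define s where "s = 1 / (1 + \<bar>?C\<bar>)"
  have s: "s > 0" "s * \<bar>?C\<bar> < 1" by (auto simp: s_def field_simps)
  \<comment> \<open>evaluate at \<open>t = s B\<close>, a parameter small enough for the linear term to dominate\<close>
  have "?B * ?B * (s * (2 + s * ?C)) \<le> 0"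
    using nonpos[of "s * ?B"] quad[of "s * ?B"] by (simp add: algebra_simps)
  moreover have "s * (2 + s * ?C) > 0"
  proof -
    have "s * (- \<bar>?C\<bar>) \<le> s * ?C" using s(1) by (intro mult_left_mono) auto
    thus ?thesis using s by simp
  qed
  moreover have "?B * ?B > 0" using ne not_real_square_gt_zero by blast
  ultimately show False using mult_pos_pos[of "?B * ?B" "s * (2 + s * ?C)"] by linarith
qed

lemma complete_lightlike_geodesic_is_line:
  assumes "complete_lightlike_geodesic b \<gamma>"
  shows "\<exists>P v. v \<noteq> 0 \<and> b v v = 0 \<and> b P P = -1 \<and> b P v = 0 \<and> \<gamma> = (\<lambda>t. P + t *\<^sub>R v)"
proof -
  obtain g1 g2 where G: "\<And>t. (\<gamma> has_vector_derivative g1 t) (at t)"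
      "\<And>t. (g1 has_vector_derivative g2 t) (at t)" "\<And>t. \<gamma> t \<in> Hpq b"
      "\<And>t. g2 t \<in> span {\<gamma> t}" "\<And>t. b (g1 t) (g1 t) = 0" "\<And>t. g1 t \<noteq> 0"
    using assms unfolding complete_lightlike_geodesic_def by metis
  have quadric: "b (\<gamma> t) (\<gamma> t) = -1" for t using G(3) by (simp add: Hpq_def)
  have velocity_orthogonal: "b (\<gamma> t) (g1 t) = 0" for t
  proof -
    have "((\<lambda>t. b (\<gamma> t) (\<gamma> t)) has_real_derivative 0) (at t)" using quadric by simp
    with has_real_derivative[OF G(1) G(1)] show ?thesis
      using DERIV_unique commute[of "g1 t"] by fastforce
  qed
  have acceleration_zero: "g2 t = 0" for t
  proof -
    obtain c where c: "g2 t = c *\<^sub>R \<gamma> t" using G(4)[of t] by (auto simp: span_singleton)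
    have "((\<lambda>t. b (\<gamma> t) (g1 t)) has_real_derivative 0) (at t)" using velocity_orthogonal by simp
    with has_real_derivative[OF G(1) G(2)] have "b (\<gamma> t) (g2 t) + b (g1 t) (g1 t) = 0"
      using DERIV_unique by blast
    thus ?thesis using c G(5) quadric by (simp add: bilinear_simps)
  qed
  obtain v where v: "\<And>t. g1 t = v"
    using has_vector_derivative_zero_constant[OF convex_UNIV, of g1] G(2) acceleration_zero by fastforce
  have "((\<lambda>t. \<gamma> t - t *\<^sub>R v) has_vector_derivative v - v) (at t)" for t
    using G(1)[of t] v by (intro derivative_eq_intros) auto
  then obtain P where P: "\<And>t. \<gamma> t - t *\<^sub>R v = P"
    using has_vector_derivative_zero_constant[OF convex_UNIV, of "\<lambda>t. \<gamma> t - t *\<^sub>R v"] by force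
  have "\<gamma> = (\<lambda>t. P + t *\<^sub>R v)" using P by (force simp: algebra_simps)
  thus ?thesis using G(5,6)[of 0] v quadric[of 0] velocity_orthogonal[of 0] by auto
qed

lemma complete_lightlike_geodesic_iff:
  "complete_lightlike_geodesic b \<gamma> \<longleftrightarrow>
     (\<exists>P v. v \<noteq> 0 \<and> b v v = 0 \<and> b P P = -1 \<and> b P v = 0 \<and> \<gamma> = (\<lambda>t. P + t *\<^sub>R v))"
  (is "_ \<longleftrightarrow> ?line")
proof
  show ?line if "complete_lightlike_geodesic b \<gamma>" using that by (rule complete_lightlike_geodesic_is_line)
next
  assume ?line
  then obtain P v where Pv: "v \<noteq> 0" "b v v = 0" "b P P = -1" "b P v = 0" "\<gamma> = (\<lambda>t. P + t *\<^sub>R v)"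
    by blast
  have "((\<lambda>t. P + t *\<^sub>R v) has_vector_derivative v) (at t)" for t :: real
    by (auto intro!: derivative_eq_intros)
  moreover have "P + t *\<^sub>R v \<in> Hpq b" for t :: real
    using Pv by (simp add: Hpq_def bilinear_simps commute[of v P])
  ultimately show "complete_lightlike_geodesic b \<gamma>" unfolding complete_lightlike_geodesic_def
    using Pv by (intro exI[of _ "\<lambda>t. v"] exI[of _ "\<lambda>t. 0"]) (auto simp: span_zero)
qed

end

section \<open>The splitting of a Fermi chart\<close>

locale fermi_frame = symmetric_form b for b :: "'a::euclidean_space \<Rightarrow> 'a \<Rightarrow> real" +
  fixes p :: nat and e0 :: 'a and U V :: "'a set"
  assumes nondegenerate: "nondegenerate b"
    and dim_pos_def_le: "\<And>S. subspace S \<Longrightarrow> pos_def_on b S \<Longrightarrow> dim S \<le> p"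
    and fermi_chart: "fermi_chart b p e0 U V"
begin

lemma e0_e0: "b e0 e0 = -1"
  and subspace_U: "subspace U" and subspace_V: "subspace V" and dim_U: "dim U = p"
  and e0_U: "u \<in> U \<Longrightarrow> b e0 u = 0" and e0_V: "v \<in> V \<Longrightarrow> b e0 v = 0"
  and U_V: "u \<in> U \<Longrightarrow> v \<in> V \<Longrightarrow> b u v = 0"
  and chart_decomposition: "\<exists>a u v. u \<in> U \<and> v \<in> V \<and> x = a *\<^sub>R e0 + u + v"
  using fermi_chart by (auto simp: fermi_chart_def)

lemma U_pos: "u \<in> U \<Longrightarrow> u \<noteq> 0 \<Longrightarrow> b u u > 0"
  using fermi_chart by (simp add: fermi_chart_def pos_def_on_def)

lemma U_nonneg: "u \<in> U \<Longrightarrow> b u u \<ge> 0"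
  using U_pos[of u] by (cases "u = 0") (auto simp: bilinear_simps)

lemma U_e0: "u \<in> U \<Longrightarrow> b u e0 = 0" and V_e0: "v \<in> V \<Longrightarrow> b v e0 = 0"
  using e0_U e0_V commute by metis+

lemma V_nonpos:
  assumes "v \<in> V" shows "b v v \<le> 0"
proof (rule ccontr)
  assume "\<not> b v v \<le> 0"
  hence vv: "b v v > 0" by simp
  have "v \<notin> U" using U_V[of v v] assms vv by auto
  hence "v \<notin> span U" using subspace_U span_eq_iff by metis
  hence dim: "dim (span (insert v U)) = p + 1"
    using dim_insert[of v U] dim_U by (simp add: dim_span)
  have "pos_def_on b (span (insert v U))"
    unfolding pos_def_on_def
  proof (intro ballI impI)
    fix y assume y: "y \<in> span (insert v U)" "y \<noteq> 0"
    then obtain t where "y - t *\<^sub>R v \<in> U"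
      using span_breakdown_eq subspace_U span_eq_iff by blast
    then obtain u where u: "u \<in> U" "y = u + t *\<^sub>R v" by (metis diff_add_cancel)
    have "b y y = b u u + t * t * b v v"
      using U_V[OF u(1) assms] commute[of v u] by (simp add: u(2) bilinear_simps)
    moreover have "t * t * b v v \<ge> 0" using vv by simp
    moreover have "u \<noteq> 0 \<or> t \<noteq> 0" using y u by auto
    ultimately show "b y y > 0"
    proof (elim disjE)
      assume "u \<noteq> 0"
      thus ?thesis using U_pos[OF u(1)] \<open>b y y = _\<close> \<open>t * t * b v v \<ge> 0\<close> by linarith
    next
      assume "t \<noteq> 0"
      hence "t * t * b v v > 0" using vv not_real_square_gt_zero by (metis mult_pos_pos)
      thus ?thesis using U_nonneg[OF u(1)] \<open>b y y = _\<close> by linarith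
    qed
  qed
  with dim_pos_def_le[of "span (insert v U)"] dim show False by simp
qed

definition W :: "'a set" where "W = span (insert e0 V)"

lemma subspace_W: "subspace W"
  by (simp add: W_def)

lemma W_iff: "w \<in> W \<longleftrightarrow> (\<exists>a v. v \<in> V \<and> w = a *\<^sub>R e0 + v)"
proof -
  have "span V = V" using subspace_V span_eq_iff by blast
  hence "w \<in> W \<longleftrightarrow> (\<exists>a. w - a *\<^sub>R e0 \<in> V)" by (simp only: W_def span_insert mem_Collect_eq)
  also have "\<dots> \<longleftrightarrow> (\<exists>a v. v \<in> V \<and> w = a *\<^sub>R e0 + v)"
    by (metis add_diff_cancel_left' diff_add_cancel add.commute)
  finally show ?thesis .
qed

lemma e0_W: "e0 \<in> W"
  by (simp add: W_def span_base)

lemmas W_add = subspace_add[OF subspace_W] and W_diff = subspace_diff[OF subspace_W]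
  and W_scale = subspace_scale[OF subspace_W] and W_neg = subspace_neg[OF subspace_W]
  and U_add = subspace_add[OF subspace_U] and U_diff = subspace_diff[OF subspace_U]
  and U_scale = subspace_scale[OF subspace_U] and U_neg = subspace_neg[OF subspace_U]

lemma U_W: "u \<in> U \<Longrightarrow> w \<in> W \<Longrightarrow> b u w = 0"
  and W_U: "u \<in> U \<Longrightarrow> w \<in> W \<Longrightarrow> b w u = 0"
  by (auto simp: W_iff bilinear_simps U_V U_e0 commute[of _ u])

lemma W_quadratic: "v \<in> V \<Longrightarrow> b (a *\<^sub>R e0 + v) (a *\<^sub>R e0 + v) = b v v - a * a"
  by (simp add: bilinear_simps e0_e0 e0_V V_e0)

lemma W_nonpos:
  assumes "w \<in> W" shows "b w w \<le> 0"
proof -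
  obtain a v where "v \<in> V" "w = a *\<^sub>R e0 + v" using assms W_iff by blast
  hence "b w w = b v v - a * a" "b v v \<le> 0" using W_quadratic V_nonpos by auto
  thus ?thesis using zero_le_square[of a] by linarith
qed

lemma W_isotropic_eq_0:
  assumes "w \<in> W" "b w w = 0" shows "w = 0"
proof -
  obtain a v where v: "v \<in> V" "w = a *\<^sub>R e0 + v" using assms W_iff by blast
  have "b v v - a * a = 0" using W_quadratic[OF v(1)] assms v by simp
  hence a0: "a = 0" and vv: "b v v = 0" using V_nonpos[OF v(1)]
    by (smt (verit) zero_le_square mult_eq_0_iff)+
  have "b v v' = 0" if "v' \<in> V" for v'
    by (rule orthogonal_if_isotropic_in_nonpos_plane[OF _ vv])
      (use subspace_add[OF subspace_V] subspace_scale[OF subspace_V] V_nonpos that v in auto)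
  hence "b v x = 0" for x
    using chart_decomposition[of x] U_V[of _ v] commute[of _ v] v(1) V_e0 by (auto simp: bilinear_simps)
  hence "v = 0" using nondegenerate by (simp add: nondegenerate_def)
  thus ?thesis using a0 v by simp
qed

lemma W_neg_definite: "w \<in> W \<Longrightarrow> w \<noteq> 0 \<Longrightarrow> b w w < 0"
  using W_nonpos W_isotropic_eq_0 by force

lemma U_W_unique:
  assumes "u \<in> U" "w \<in> W" "u' \<in> U" "w' \<in> W" "u + w = u' + w'"
  shows "u = u'" "w = w'"
proof -
  have "u - u' = w' - w" using assms(5) by (simp add: algebra_simps)
  moreover have "u - u' \<in> U" "w' - w \<in> W" using assms U_diff W_diff by auto
  ultimately have "u - u' = 0" using U_W[of "u - u'" "u - u'"] U_pos by force
  thus "u = u'" "w = w'" using assms(5) by simp_all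
qed

lemma U_W_decomposition: "\<exists>u w. u \<in> U \<and> w \<in> W \<and> x = u + w"
proof -
  obtain a u v where "u \<in> U" "v \<in> V" "x = a *\<^sub>R e0 + u + v" using chart_decomposition by blast
  thus ?thesis unfolding W_iff by (intro exI[of _ u] exI[of _ "a *\<^sub>R e0 + v"]) (auto simp: algebra_simps)
qed

definition pU :: "'a \<Rightarrow> 'a" where "pU x = (THE u. u \<in> U \<and> x - u \<in> W)"
definition pW :: "'a \<Rightarrow> 'a" where "pW x = x - pU x"

lemma pU_eqI: "u \<in> U \<Longrightarrow> x - u \<in> W \<Longrightarrow> pU x = u"
  unfolding pU_def
proof (rule the_equality)
  fix u' assume "u \<in> U" "x - u \<in> W" "u' \<in> U \<and> x - u' \<in> W"
  thus "u' = u" using U_W_unique(1)[of u' "x - u'" u "x - u"] by auto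
qed auto

lemma pU_in_U: "pU x \<in> U" and pW_in_W: "pW x \<in> W"
proof -
  obtain u w where "u \<in> U" "w \<in> W" "x = u + w" using U_W_decomposition by blast
  thus "pU x \<in> U" "pW x \<in> W" using pU_eqI[of u x] by (auto simp: pW_def)
qed

lemma pU_pW: "pU x + pW x = x" by (simp add: pW_def)

lemma linear_pU: "linear pU"
proof (rule linearI)
  fix x y c
  have "x + y - (pU x + pU y) = pW x + pW y" "c *\<^sub>R x - c *\<^sub>R pU x = c *\<^sub>R pW x"
    by (simp_all add: pW_def algebra_simps)
  thus "pU (x + y) = pU x + pU y" "pU (c *\<^sub>R x) = c *\<^sub>R pU x"
    using pU_in_U pW_in_W U_add W_add U_scale W_scale by (metis pU_eqI)+
qed

lemma linear_pW: "linear pW"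
  by (rule linearI) (simp_all add: pW_def linear_add[OF linear_pU] linear_scale[OF linear_pU] algebra_simps)

lemma pU_U: "x \<in> U \<Longrightarrow> pU x = x" and pU_W: "x \<in> W \<Longrightarrow> pU x = 0"
  using pU_eqI subspace_0[OF subspace_W] subspace_0[OF subspace_U] by auto

lemma pW_W: "x \<in> W \<Longrightarrow> pW x = x" and pW_U: "x \<in> U \<Longrightarrow> pW x = 0"
  using pU_W pU_U by (simp_all add: pW_def)

lemma pU_eq_0_iff: "pU x = 0 \<longleftrightarrow> x \<in> W"
  using pU_W pW_in_W[of x] by (auto simp: pW_def)

lemma b_decompose: "b x y = b (pU x) (pU y) + b (pW x) (pW y)"
proof -
  have "b x y = b (pU x + pW x) (pU y + pW y)" by (simp add: pU_pW)
  thus ?thesis using U_W[OF pU_in_U pW_in_W] W_U[OF pU_in_U pW_in_W] by (simp add: bilinear_simps)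
qed

definition euclid :: "'a \<Rightarrow> 'a \<Rightarrow> real" where
  "euclid x y = b (pU x) (pU y) - b (pW x) (pW y)"

lemma euclid_sym: "euclid x y = euclid y x"
  by (simp add: euclid_def commute)

lemma bounded_bilinear_euclid: "bounded_bilinear euclid"
proof -
  have "bilinear euclid"
    unfolding bilinear_def euclid_def using linear_pU linear_pW
    by (auto intro!: linearI simp: linear_add linear_scale bilinear_simps algebra_simps)
  thus ?thesis using bilinear_conv_bounded_bilinear by blast
qed

lemmas euclid_simps =
  bounded_bilinear.add_left[OF bounded_bilinear_euclid]
  bounded_bilinear.add_right[OF bounded_bilinear_euclid]
  bounded_bilinear.diff_left[OF bounded_bilinear_euclid]
  bounded_bilinear.diff_right[OF bounded_bilinear_euclid]
  bounded_bilinear.scaleR_left[OF bounded_bilinear_euclid]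
  bounded_bilinear.scaleR_right[OF bounded_bilinear_euclid]

lemma euclid_nonneg: "euclid x x \<ge> 0"
  using W_nonpos[OF pW_in_W, of x] U_nonneg[OF pU_in_U, of x] by (simp add: euclid_def)

lemma euclid_pos: "x \<noteq> 0 \<Longrightarrow> euclid x x > 0"
proof -
  assume "x \<noteq> 0"
  hence "pU x \<noteq> 0 \<or> pW x \<noteq> 0" using pU_pW[of x] by auto
  thus ?thesis
    using W_nonpos[OF pW_in_W, of x] W_neg_definite[OF pW_in_W, of x] U_pos[OF pU_in_U, of x]
      U_nonneg[OF pU_in_U, of x]
    unfolding euclid_def by linarith
qed

lemma euclid_U: "x \<in> U \<Longrightarrow> y \<in> U \<Longrightarrow> euclid x y = b x y"
  and euclid_W: "x \<in> W \<Longrightarrow> y \<in> W \<Longrightarrow> euclid x y = - b x y"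
  by (simp_all add: euclid_def pU_U pW_U pU_W pW_W bilinear_simps)

lemma euclid_Cauchy_Schwarz: assumes "euclid x x = 1" "euclid y y = 1" shows "\<bar>euclid x y\<bar> \<le> 1"
proof -
  have "0 \<le> euclid (x - euclid x y *\<^sub>R y) (x - euclid x y *\<^sub>R y)" by (rule euclid_nonneg)
  also have "\<dots> = 1 - (euclid x y)\<^sup>2"
    using assms by (simp add: euclid_simps euclid_sym[of y x] power2_eq_square algebra_simps)
  finally show ?thesis by (simp add: abs_square_le_1)
qed

lemma euclid_dist_units: "euclid x x = 1 \<Longrightarrow> euclid y y = 1 \<Longrightarrow> euclid (x - y) (x - y) = 2 - 2 * euclid x y"
  by (simp add: euclid_simps euclid_sym[of y x])

lemma euclid_eq_if_ge_1: assumes "euclid x x = 1" "euclid y y = 1" "euclid x y \<ge> 1" shows "x = y"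
  using euclid_dist_units[OF assms(1,2)] euclid_pos[of "x - y"] assms(3) by force

lemma euclid_unit_orthogonal_part:
  assumes "euclid x x = 1" "euclid e e = 1" "euclid x e = sin s" "cos s > 0"
  shows "euclid ((1 / cos s) *\<^sub>R (x - sin s *\<^sub>R e)) ((1 / cos s) *\<^sub>R (x - sin s *\<^sub>R e)) = 1"
    and "euclid ((1 / cos s) *\<^sub>R (x - sin s *\<^sub>R e)) e = 0"
proof -
  have "euclid (x - sin s *\<^sub>R e) (x - sin s *\<^sub>R e) = 1 - sin s * sin s"
    using assms(1-3) by (simp add: euclid_simps euclid_sym[of e x] algebra_simps)
  also have "\<dots> = cos s * cos s" by (simp add: cos_squared_eq power2_eq_square[symmetric])
  moreover have "euclid ((1 / cos s) *\<^sub>R (x - sin s *\<^sub>R e)) ((1 / cos s) *\<^sub>R (x - sin s *\<^sub>R e))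
      = (1 / cos s) * ((1 / cos s) * euclid (x - sin s *\<^sub>R e) (x - sin s *\<^sub>R e))"
    by (simp only: bounded_bilinear.scaleR_left[OF bounded_bilinear_euclid]
        bounded_bilinear.scaleR_right[OF bounded_bilinear_euclid] real_scaleR_def)
  ultimately show "euclid ((1 / cos s) *\<^sub>R (x - sin s *\<^sub>R e)) ((1 / cos s) *\<^sub>R (x - sin s *\<^sub>R e)) = 1"
    using assms(4) by simp
  show "euclid ((1 / cos s) *\<^sub>R (x - sin s *\<^sub>R e)) e = 0"
    using assms(2,3) by (simp add: euclid_simps)
qed

lemma norm_le_euclid: "\<exists>C>0. \<forall>x. (norm x)\<^sup>2 \<le> C * euclid x x"
proof -
  have "continuous_on (sphere 0 1) (\<lambda>x. euclid x x)"
    by (intro bounded_bilinear.continuous_on[OF bounded_bilinear_euclid] continuous_on_id)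
  moreover have "(SOME i. i \<in> Basis) \<in> sphere (0::'a) 1"
    using norm_Basis[OF SOME_Basis] by simp
  hence "sphere (0::'a) 1 \<noteq> {}" by blast
  ultimately obtain m where m: "m \<in> sphere (0::'a) 1" "\<And>y. y \<in> sphere 0 1 \<Longrightarrow> euclid m m \<le> euclid y y"
    using continuous_attains_inf[OF compact_sphere] by blast
  have "m \<noteq> 0" using m(1) by auto
  hence mpos: "euclid m m > 0" using euclid_pos by blast
  have "euclid m m * (norm x)\<^sup>2 \<le> euclid x x" for x
  proof (cases "x = 0")
    case True thus ?thesis by (simp add: euclid_def linear_0[OF linear_pU] linear_0[OF linear_pW] bilinear_simps)
  next
    case False
    hence "euclid m m \<le> euclid ((1 / norm x) *\<^sub>R x) ((1 / norm x) *\<^sub>R x)" using m(2) by simp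
    also have "\<dots> = euclid x x / (norm x)\<^sup>2" by (simp add: euclid_simps power2_eq_square)
    finally show ?thesis using False by (simp add: field_simps)
  qed
  hence "(norm x)\<^sup>2 \<le> (1 / euclid m m) * euclid x x" for x using mpos by (simp add: field_simps)
  thus ?thesis using mpos by (intro exI[of _ "1 / euclid m m"]) auto
qed

lemma euclid_le_norm: "\<exists>K>0. \<forall>x. euclid x x \<le> K * (norm x)\<^sup>2"
proof -
  obtain K where "K > 0" "\<And>x y. norm (euclid x y) \<le> norm x * norm y * K"
    using bounded_bilinear.pos_bounded[OF bounded_bilinear_euclid] by blast
  hence "euclid x x \<le> K * (norm x)\<^sup>2" for x
    using abs_le_D1[of "euclid x x"] by (simp add: power2_eq_square algebra_simps)
  thus ?thesis using \<open>K > 0\<close> by blast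
qed

definition height :: "'a \<Rightarrow> real" where "height x = - b x e0"
definition horizontal :: "'a \<Rightarrow> 'a" where "horizontal x = x + b x e0 *\<^sub>R e0"

lemma horizontal_height: "x = horizontal x + height x *\<^sub>R e0"
  by (simp add: horizontal_def height_def)

lemma horizontal_e0: "b (horizontal x) e0 = 0" "b e0 (horizontal x) = 0"
  using commute[of e0 "horizontal x"] by (simp_all add: horizontal_def bilinear_simps e0_e0)

lemma horizontal_add: "horizontal (x + y) = horizontal x + horizontal y"
  and horizontal_scaleR: "horizontal (c *\<^sub>R x) = c *\<^sub>R horizontal x"
  and height_add: "height (x + y) = height x + height y"
  and height_scaleR: "height (c *\<^sub>R x) = c * height x"
  by (simp_all add: horizontal_def height_def bilinear_simps algebra_simps)

lemma horizontal_U: "u \<in> U \<Longrightarrow> horizontal u = u" and height_U: "u \<in> U \<Longrightarrow> height u = 0"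
  by (simp_all add: horizontal_def height_def U_e0)

lemma horizontal_chart: "u \<in> U \<Longrightarrow> horizontal (a *\<^sub>R e0 + u) = u"
  by (simp add: horizontal_def bilinear_simps e0_e0 U_e0)

lemma horizontal_e0_0: "horizontal e0 = 0" and height_e0: "height e0 = 1"
  by (simp_all add: horizontal_def height_def e0_e0)

lemma ipS_eq: "ipS b e0 x y = b (horizontal x) (horizontal y) + height x * height y"
proof -
  have "b x y = b (horizontal x + height x *\<^sub>R e0) (horizontal y + height y *\<^sub>R e0)"
    using horizontal_height[of x] horizontal_height[of y] by simp
  also have "\<dots> = b (horizontal x) (horizontal y) - height x * height y"
    by (simp add: bilinear_simps horizontal_e0 e0_e0)
  finally show ?thesis by (simp add: ipS_def height_def algebra_simps)
qed

lemma ipS_U: "u \<in> U \<Longrightarrow> ipS b e0 u v = b u (horizontal v)"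
  by (simp add: ipS_eq horizontal_U height_U)

lemma Sp_iff: "x \<in> Sp b e0 U \<longleftrightarrow> horizontal x \<in> U \<and> b (horizontal x) (horizontal x) + (height x)\<^sup>2 = 1"
proof
  assume "x \<in> Sp b e0 U"
  then obtain a u where "u \<in> U" "x = a *\<^sub>R e0 + u" "ipS b e0 x x = 1" by (auto simp: Sp_def)
  thus "horizontal x \<in> U \<and> b (horizontal x) (horizontal x) + (height x)\<^sup>2 = 1"
    using horizontal_chart ipS_eq[of x x] by (simp add: power2_eq_square)
next
  assume "horizontal x \<in> U \<and> b (horizontal x) (horizontal x) + (height x)\<^sup>2 = 1"
  moreover have "x = height x *\<^sub>R e0 + horizontal x" using horizontal_height[of x] by (simp add: add.commute)
  ultimately show "x \<in> Sp b e0 U" using ipS_eq[of x x] unfolding Sp_def by (auto simp: power2_eq_square)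
qed

lemma Sp_plus_iff:
  "x \<in> Sp_plus b e0 U \<longleftrightarrow> horizontal x \<in> U \<and> b (horizontal x) (horizontal x) + (height x)\<^sup>2 = 1 \<and> height x > 0"
  by (auto simp: Sp_plus_def Sp_iff height_def)

lemma Sp_plusD:
  assumes "x \<in> Sp_plus b e0 U"
  shows "horizontal x \<in> U" "b (horizontal x) (horizontal x) = 1 - (height x)\<^sup>2" "height x > 0"
  using assms Sp_plus_iff by auto

lemma e0_Sp_plus: "e0 \<in> Sp_plus b e0 U"
  using Sp_plus_iff subspace_0[OF subspace_U] by (simp add: horizontal_e0_0 height_e0 bilinear_simps)

lemma Sq_iff: "w \<in> Sq b e0 V \<longleftrightarrow> w \<in> W \<and> b w w = -1"
  by (auto simp: Sq_def W_iff)

lemma euclid_Sp: "horizontal x \<in> U \<Longrightarrow> horizontal y \<in> U \<Longrightarrow> euclid x y = ipS b e0 x y"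
proof -
  assume "horizontal x \<in> U" "horizontal y \<in> U"
  moreover have "z - horizontal z = height z *\<^sub>R e0" for z by (simp add: horizontal_def height_def)
  moreover have "height z *\<^sub>R e0 \<in> W" for z using W_scale[OF e0_W] .
  ultimately have "pU x = horizontal x" "pU y = horizontal y" "pW x = height x *\<^sub>R e0" "pW y = height y *\<^sub>R e0"
    using pU_eqI by (auto simp: pW_def)
  thus ?thesis by (simp add: euclid_def ipS_eq bilinear_simps e0_e0)
qed

lemma euclid_Sp_plus: "u \<in> Sp_plus b e0 U \<Longrightarrow> v \<in> Sp_plus b e0 U \<Longrightarrow> euclid u v = ipS b e0 u v"
  and euclid_Sp_plus_unit: "u \<in> Sp_plus b e0 U \<Longrightarrow> euclid u u = 1"
  using euclid_Sp Sp_plusD ipS_eq[of u u] by (auto simp: power2_eq_square)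

lemma euclid_Sq: "w \<in> Sq b e0 V \<Longrightarrow> w' \<in> Sq b e0 V \<Longrightarrow> euclid w w' = ipW b w w'"
  and euclid_Sq_unit: "w \<in> Sq b e0 V \<Longrightarrow> euclid w w = 1"
  using euclid_W Sq_iff by (auto simp: ipW_def)

lemma lip1_iff:
  assumes "\<psi> ` S \<subseteq> Sq b e0 V" "S \<subseteq> Sp_plus b e0 U"
  shows "lip1 (ipS b e0) (ipW b) S \<psi> \<longleftrightarrow> (\<forall>x\<in>S. \<forall>y\<in>S. ipS b e0 x y \<le> ipW b (\<psi> x) (\<psi> y))"
proof -
  have "\<bar>ipS b e0 x y\<bar> \<le> 1" "\<bar>ipW b (\<psi> x) (\<psi> y)\<bar> \<le> 1" if "x \<in> S" "y \<in> S" for x y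
  proof -
    have "x \<in> Sp_plus b e0 U" "y \<in> Sp_plus b e0 U" "\<psi> x \<in> Sq b e0 V" "\<psi> y \<in> Sq b e0 V"
      using assms that by auto
    thus "\<bar>ipS b e0 x y\<bar> \<le> 1" "\<bar>ipW b (\<psi> x) (\<psi> y)\<bar> \<le> 1"
      using euclid_Cauchy_Schwarz euclid_Sp_plus euclid_Sp_plus_unit euclid_Sq euclid_Sq_unit by metis+
  qed
  hence "arccos (ipW b (\<psi> x) (\<psi> y)) \<le> arccos (ipS b e0 x y) \<longleftrightarrow> ipS b e0 x y \<le> ipW b (\<psi> x) (\<psi> y)"
    if "x \<in> S" "y \<in> S" for x y
    using that arccos_le_arccos arccos_less_arccos[of "ipW b (\<psi> x) (\<psi> y)" "ipS b e0 x y"]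
    by (smt (verit, best))
  thus ?thesis unfolding lip1_def by blast
qed

lemma Psi_eq:
  assumes "u \<in> Sp_plus b e0 U" shows "Psi b e0 u w = (1 / height u) *\<^sub>R (horizontal u + w)"
proof -
  define a where "a = height u"
  have a: "a > 0" "b (horizontal u) (horizontal u) = (1 - a) * (1 + a)"
    using Sp_plusD[OF assms] by (auto simp: a_def power2_eq_square algebra_simps)
  have stereo: "stereo b e0 u = (1 / (1 + a)) *\<^sub>R horizontal u"
    by (simp add: stereo_def horizontal_def a_def height_def)
  define n where "n = b (stereo b e0 u) (stereo b e0 u)"
  have "n = (1 / (1 + a)) * ((1 / (1 + a)) * ((1 - a) * (1 + a)))"
    by (simp add: n_def stereo bilinear_simps a(2))
  also have "\<dots> = (1 - a) / (1 + a)"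
  proof -
    have "(1 / (1 + a)) * ((1 - a) * (1 + a)) = 1 - a" using a(1) by (simp add: field_simps)
    thus ?thesis by simp
  qed
  finally have "n = (1 - a) / (1 + a)" .
  hence minus: "1 - n = 2 * a / (1 + a)" and plus: "1 + n = 2 / (1 + a)"
    using a(1) by (simp_all add: field_simps)
  from minus have inv: "1 / (1 - n) = (1 + a) / (2 * a)" by simp
  have coeffs: "1 / (1 - n) * (2 * (1 / (1 + a))) = 1 / a" "1 / (1 - n) * (1 + n) = 1 / a"
    unfolding inv plus using a(1) by (simp_all add: field_simps, smt (verit) mult_pos_pos)+
  have "Psi b e0 u w = (1 / (1 - n)) *\<^sub>R (2 *\<^sub>R ((1 / (1 + a)) *\<^sub>R horizontal u) + (1 + n) *\<^sub>R w)"
    by (simp add: Psi_def Let_def n_def stereo)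
  also have "\<dots> = (1 / (1 - n) * (2 * (1 / (1 + a)))) *\<^sub>R horizontal u + (1 / (1 - n) * (1 + n)) *\<^sub>R w"
    by (simp add: scaleR_add_right)
  also have "\<dots> = (1 / a) *\<^sub>R (horizontal u + w)" by (simp only: coeffs scaleR_add_right)
  finally show ?thesis by (simp add: a_def)
qed

lemma b_Psi:
  assumes "u \<in> Sp_plus b e0 U" "v \<in> Sp_plus b e0 U" "w \<in> W" "w' \<in> W"
  shows "b (Psi b e0 u w) (Psi b e0 v w') = (ipS b e0 u v - ipW b w w') / (height u * height v) - 1"
proof -
  note u = Sp_plusD[OF assms(1)] and v = Sp_plusD[OF assms(2)]
  have "b (Psi b e0 u w) (Psi b e0 v w')
      = (b (horizontal u) (horizontal v) + b w w') / (height u * height v)"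
    using U_W[OF u(1) assms(4)] W_U[OF v(1) assms(3)] u(3) v(3)
    by (simp add: Psi_eq[OF assms(1)] Psi_eq[OF assms(2)] bilinear_simps field_simps)
  thus ?thesis using u(3) v(3) by (simp add: ipS_eq ipW_def field_simps)
qed

lemma Psi_quadric:
  assumes "u \<in> Sp_plus b e0 U" "w \<in> Sq b e0 V" shows "b (Psi b e0 u w) (Psi b e0 u w) = -1"
  using b_Psi[OF assms(1,1)] assms euclid_Sp_plus[OF assms(1,1)] euclid_Sp_plus_unit[OF assms(1)]
    euclid_Sq[OF assms(2,2)] euclid_Sq_unit[OF assms(2)] Sq_iff by simp

lemma pU_Psi: "u \<in> Sp_plus b e0 U \<Longrightarrow> w \<in> W \<Longrightarrow> pU (Psi b e0 u w) = (1 / height u) *\<^sub>R horizontal u"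
  using Sp_plusD(1)
  by (simp add: Psi_eq linear_scale[OF linear_pU] linear_add[OF linear_pU] pU_U pU_W)

definition radius :: "'a \<Rightarrow> real" where "radius P = sqrt (1 + b (pU P) (pU P))"
definition base :: "'a \<Rightarrow> 'a" where "base P = (1 / radius P) *\<^sub>R (e0 + pU P)"
definition fibre :: "'a \<Rightarrow> 'a" where "fibre P = (1 / radius P) *\<^sub>R pW P"

lemma radius_pos: "radius P > 0" and radius_sq: "(radius P)\<^sup>2 = 1 + b (pU P) (pU P)"
proof -
  have "1 + b (pU P) (pU P) > 0" using U_nonneg[OF pU_in_U, of P] by linarith
  thus "radius P > 0" "(radius P)\<^sup>2 = 1 + b (pU P) (pU P)" by (simp_all add: radius_def)
qed

lemma height_base: "height (base P) = 1 / radius P"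
  by (simp add: base_def height_def bilinear_simps e0_e0 U_e0[OF pU_in_U])

lemma horizontal_base: "horizontal (base P) = (1 / radius P) *\<^sub>R pU P"
proof -
  have "b (base P) e0 = - (1 / radius P)" using height_base[of P] by (simp add: height_def)
  thus ?thesis by (simp add: horizontal_def base_def scaleR_add_right)
qed

lemma pU_eq_base: "pU P = (1 / height (base P)) *\<^sub>R horizontal (base P)"
  using radius_pos[of P] by (simp add: height_base horizontal_base)

lemma base_in_Sp_plus: "base P \<in> Sp_plus b e0 U"
  unfolding Sp_plus_iff height_base horizontal_base
proof (intro conjI)
  show "(1 / radius P) *\<^sub>R pU P \<in> U" using U_scale pU_in_U by blast
  show "0 < 1 / radius P" using radius_pos by simp
  have "b ((1 / radius P) *\<^sub>R pU P) ((1 / radius P) *\<^sub>R pU P) + (1 / radius P)\<^sup>2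
      = (b (pU P) (pU P) + 1) / (radius P)\<^sup>2"
    using radius_pos[of P] by (simp add: bilinear_simps power2_eq_square field_simps)
  also have "\<dots> = 1" using radius_pos[of P] radius_sq[of P] by (metis add.commute divide_self less_irrefl zero_less_power)
  finally show "b ((1 / radius P) *\<^sub>R pU P) ((1 / radius P) *\<^sub>R pU P) + (1 / radius P)\<^sup>2 = 1" .
qed

lemma fibre_in_Sq: assumes "b P P = -1" shows "fibre P \<in> Sq b e0 V"
  unfolding Sq_iff
proof
  show "fibre P \<in> W" using W_scale pW_in_W by (simp add: fibre_def)
  have "b (pW P) (pW P) = - (radius P)\<^sup>2" using b_decompose[of P P] assms radius_sq by simp
  thus "b (fibre P) (fibre P) = -1" using radius_pos[of P] by (simp add: fibre_def bilinear_simps power2_eq_square)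
qed

lemma Psi_base_fibre: "Psi b e0 (base P) (fibre P) = P"
  using radius_pos[of P] pU_pW[of P]
  by (simp add: Psi_eq[OF base_in_Sp_plus] height_base horizontal_base fibre_def scaleR_add_right)

lemma base_eqI:
  assumes u: "u \<in> Sp_plus b e0 U" and P: "pU P = (1 / height u) *\<^sub>R horizontal u"
  shows "base P = u"
proof -
  note D = Sp_plusD[OF u]
  have "(radius P)\<^sup>2 = (1 / height u)\<^sup>2"
    using radius_sq[of P] P D by (simp add: bilinear_simps field_simps power2_eq_square)
  hence "1 / radius P = height u" using radius_pos[of P] D(3)
    by (metis less_eq_real_def power2_eq_iff_nonneg zero_le_divide_1_iff divide_divide_eq_right
        div_by_1 mult_1)
  thus ?thesis using D(3) horizontal_height[of u]
    by (simp add: base_def P scaleR_add_right algebra_simps)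
qed

lemma base_Psi: "u \<in> Sp_plus b e0 U \<Longrightarrow> w \<in> W \<Longrightarrow> base (Psi b e0 u w) = u"
  using base_eqI pU_Psi by blast

lemma fibre_Psi: assumes "u \<in> Sp_plus b e0 U" "w \<in> W" shows "fibre (Psi b e0 u w) = w"
proof -
  let ?P = "Psi b e0 u w"
  have "Psi b e0 u (fibre ?P) = ?P"
    using Psi_base_fibre[of ?P] base_Psi[OF assms] by simp
  thus ?thesis using Sp_plusD(3)[OF assms(1)] by (simp add: Psi_eq[OF assms(1)])
qed

lemma b_Psi_le_iff:
  assumes "u \<in> Sp_plus b e0 U" "v \<in> Sp_plus b e0 U" "w \<in> W" "w' \<in> W"
  shows "b (Psi b e0 u w) (Psi b e0 v w') \<le> -1 \<longleftrightarrow> ipS b e0 u v \<le> ipW b w w'"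
proof -
  have "height u * height v > 0" using Sp_plusD(3) assms(1,2) by simp
  thus ?thesis by (simp add: b_Psi[OF assms] divide_le_0_iff)
qed

text \<open>Two points of the quadric over the same point of \<open>U\<close> differ by a vector of the negative
  definite \<open>W\<close>; achronality makes that vector non-negative, hence zero.\<close>
lemma eq_if_achronal_same_pU:
  assumes "b P P = -1" "b Q Q = -1" "pU P = pU Q" "b P Q \<le> -1"
  shows "P = Q"
proof -
  have "b (P - Q) (P - Q) = -2 - 2 * b P Q" using assms(1,2) by (simp add: bilinear_simps commute[of Q P])
  moreover have "P - Q \<in> W" using assms(3) pU_eq_0_iff[of "P - Q"] by (simp add: linear_diff[OF linear_pU])
  ultimately show ?thesis using W_neg_definite[of "P - Q"] assms(4) by force
qed

lemma achronal_ex1_base: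
  assumes quadric: "\<And>P. P \<in> S \<Longrightarrow> b P P = -1"
    and achronal: "\<And>P Q. P \<in> S \<Longrightarrow> Q \<in> S \<Longrightarrow> b P Q \<le> -1"
    and onto: "U \<subseteq> pU ` S" and u: "u \<in> Sp_plus b e0 U"
  shows "\<exists>!P. P \<in> S \<and> base P = u"
proof -
  have "(1 / height u) *\<^sub>R horizontal u \<in> U" using U_scale Sp_plusD(1)[OF u] by blast
  then obtain P where "P \<in> S" "pU P = (1 / height u) *\<^sub>R horizontal u" using onto by auto
  hence "P \<in> S \<and> base P = u" using base_eqI[OF u, of P] by blast
  moreover have "P = Q" if "P \<in> S" "Q \<in> S" "base P = base Q" for P Q
  proof (rule eq_if_achronal_same_pU)
    show "pU P = pU Q" using pU_eq_base[of P] pU_eq_base[of Q] that(3) by simp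
  qed (simp_all add: quadric achronal that)
  ultimately show ?thesis by blast
qed

lemma graph_map_of_achronal:
  assumes quadric: "\<And>P. P \<in> S \<Longrightarrow> b P P = -1"
    and achronal: "\<And>P Q. P \<in> S \<Longrightarrow> Q \<in> S \<Longrightarrow> b P Q \<le> -1"
    and onto: "U \<subseteq> pU ` S"
  shows "\<exists>\<phi>. graph_map b e0 U V \<phi> \<and> graph_of b e0 U \<phi> = S"
proof -
  have ex1: "\<exists>!P. P \<in> S \<and> base P = u" if "u \<in> Sp_plus b e0 U" for u
    by (rule achronal_ex1_base[OF _ _ onto that]) (fact quadric, fact achronal)
  define sel where "sel u = (THE P. P \<in> S \<and> base P = u)" for u
  have sel: "sel u \<in> S" "base (sel u) = u" if "u \<in> Sp_plus b e0 U" for u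
    using theI'[OF ex1[OF that]] by (simp_all add: sel_def)
  define \<phi> where "\<phi> u = fibre (sel u)" for u
  have Psi_\<phi>: "Psi b e0 u (\<phi> u) = sel u" if "u \<in> Sp_plus b e0 U" for u
    using Psi_base_fibre[of "sel u"] sel[OF that] by (simp add: \<phi>_def)
  have into: "\<phi> ` Sp_plus b e0 U \<subseteq> Sq b e0 V"
    using fibre_in_Sq quadric sel by (auto simp: \<phi>_def)
  have "ipS b e0 u v \<le> ipW b (\<phi> u) (\<phi> v)" if uv: "u \<in> Sp_plus b e0 U" "v \<in> Sp_plus b e0 U" for u v
  proof -
    have "\<phi> u \<in> W" "\<phi> v \<in> W" using into uv Sq_iff by auto
    moreover have "b (Psi b e0 u (\<phi> u)) (Psi b e0 v (\<phi> v)) \<le> -1"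
      using achronal sel uv Psi_\<phi> by simp
    ultimately show ?thesis using b_Psi_le_iff[OF uv] by blast
  qed
  hence "lip1 (ipS b e0) (ipW b) (Sp_plus b e0 U) \<phi>" using lip1_iff[OF into] by blast
  moreover have "graph_of b e0 U \<phi> = S"
  proof -
    have "graph_of b e0 U \<phi> = sel ` Sp_plus b e0 U" using Psi_\<phi> by (simp add: graph_of_def)
    moreover have "sel (base Q) = Q" if "Q \<in> S" for Q
      using the1_equality[OF ex1[OF base_in_Sp_plus]] that by (simp add: sel_def)
    hence "S \<subseteq> sel ` Sp_plus b e0 U" using base_in_Sp_plus by (metis image_eqI subsetI)
    ultimately show ?thesis using sel by auto
  qed
  ultimately show ?thesis using into by (auto simp: graph_map_def)
qed

lemma bounded_quadric_pU_sublevel: "bounded {P. b P P = -1 \<and> norm (pU P) \<le> r}"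
proof -
  obtain C where C: "C > 0" "\<And>x. (norm x)\<^sup>2 \<le> C * euclid x x" using norm_le_euclid by blast
  obtain K where K: "K > 0" "\<And>x. euclid x x \<le> K * (norm x)\<^sup>2" using euclid_le_norm by blast
  have "norm P \<le> sqrt (C * (2 * (K * r\<^sup>2) + 1))" if P: "b P P = -1" "norm (pU P) \<le> r" for P
  proof -
    \<comment> \<open>on the quadric the \<open>W\<close>-part is controlled by the \<open>U\<close>-part\<close>
    have "euclid P P = 2 * euclid (pU P) (pU P) + 1"
      using b_decompose[of P P] P(1) euclid_U[OF pU_in_U pU_in_U] by (simp add: euclid_def)
    also have "\<dots> \<le> 2 * (K * r\<^sup>2) + 1"
    proof -
      have "K * (norm (pU P))\<^sup>2 \<le> K * r\<^sup>2"
        using K(1) power_mono[OF P(2) norm_ge_zero] by (simp add: mult_left_mono)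
      thus ?thesis using K(2)[of "pU P"] by linarith
    qed
    finally have "(norm P)\<^sup>2 \<le> C * (2 * (K * r\<^sup>2) + 1)"
      using C mult_left_mono[of _ _ C] by (meson less_imp_le order_trans)
    thus ?thesis by (simp add: real_le_rsqrt)
  qed
  thus ?thesis unfolding bounded_iff by blast
qed

lemma continuous_on_pU: "continuous_on S pU"
  using linear_pU linear_continuous_on linear_conv_bounded_linear by blast

lemma continuous_on_radius: "continuous_on S radius"
  unfolding radius_def by (intro continuous_intros continuous_on continuous_on_pU)

lemma continuous_on_base: "continuous_on S base"
  unfolding base_def
  by (intro continuous_intros continuous_on_radius continuous_on_pU) (metis radius_pos less_irrefl)

lemma closed_Sq: "closed (Sq b e0 V)"
proof -
  have "closed (W \<inter> {w. b w w = -1})"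
    using closed_subspace[OF subspace_W] continuous_on[OF continuous_on_id continuous_on_id]
      continuous_closed_preimage_constant[of UNIV "\<lambda>w. b w w" "-1"] by auto
  moreover have "W \<inter> {w. b w w = -1} = Sq b e0 V" using Sq_iff by auto
  ultimately show ?thesis by simp
qed

lemma great_circle_in_Sp_plus:
  assumes u: "u \<in> U" "b u u = 1" and v: "v \<in> Sp_plus b e0 U" "b u (horizontal v) = 0"
    and t: "- (pi / 2) < t" "t < pi / 2"
  shows "sin t *\<^sub>R u + cos t *\<^sub>R v \<in> Sp_plus b e0 U"
    "height (sin t *\<^sub>R u + cos t *\<^sub>R v) = cos t * height v"
    "horizontal (sin t *\<^sub>R u + cos t *\<^sub>R v) = sin t *\<^sub>R u + cos t *\<^sub>R horizontal v"
proof -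
  note D = Sp_plusD[OF v(1)]
  show height: "height (sin t *\<^sub>R u + cos t *\<^sub>R v) = cos t * height v"
    by (simp add: height_add height_scaleR height_U[OF u(1)])
  show horizontal: "horizontal (sin t *\<^sub>R u + cos t *\<^sub>R v) = sin t *\<^sub>R u + cos t *\<^sub>R horizontal v"
    by (simp add: horizontal_add horizontal_scaleR horizontal_U[OF u(1)])
  have "b (sin t *\<^sub>R u + cos t *\<^sub>R horizontal v) (sin t *\<^sub>R u + cos t *\<^sub>R horizontal v) + (cos t * height v)\<^sup>2
        = (sin t)\<^sup>2 * b u u + (cos t)\<^sup>2 * (b (horizontal v) (horizontal v) + (height v)\<^sup>2)
          + 2 * sin t * cos t * b u (horizontal v)"
    by (simp add: bilinear_simps commute[of "horizontal v" u] power2_eq_square algebra_simps)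
  also have "\<dots> = 1" using u(2) v(2) D(2) by (simp add: sin_cos_squared_add)
  moreover have "sin t *\<^sub>R u + cos t *\<^sub>R horizontal v \<in> U" using u(1) D(1) U_add U_scale by blast
  moreover have "cos t * height v > 0" using cos_gt_zero_pi[OF t] D(3) by simp
  ultimately show "sin t *\<^sub>R u + cos t *\<^sub>R v \<in> Sp_plus b e0 U"
    unfolding Sp_plus_iff height horizontal by simp
qed

lemma equator_add_W_nonzero:
  assumes "u \<in> equator b U" "w \<in> W" shows "u + w \<noteq> 0"
proof
  assume "u + w = 0"
  moreover have "b (u + w) u = 1" using W_U[of u w] assms by (simp add: equator_def bilinear_simps)
  ultimately show False by (simp add: zero_left)
qed

lemma meridian_in_Sp_plus:
  assumes "u \<in> equator b U" "- (pi / 2) < t" "t < pi / 2"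
  shows "sin t *\<^sub>R u + cos t *\<^sub>R e0 \<in> Sp_plus b e0 U"
    "height (sin t *\<^sub>R u + cos t *\<^sub>R e0) = cos t"
    "horizontal (sin t *\<^sub>R u + cos t *\<^sub>R e0) = sin t *\<^sub>R u"
  using great_circle_in_Sp_plus[OF _ _ e0_Sp_plus _ assms(2,3), of u] assms(1)
  by (auto simp: equator_def horizontal_e0_0 height_e0 bilinear_simps)

lemma eventually_meridian_in_Sp_plus:
  assumes "u \<in> equator b U"
  shows "eventually (\<lambda>t. sin t *\<^sub>R u + cos t *\<^sub>R e0 \<in> Sp_plus b e0 U) (at_left (pi / 2))"
  using eventually_at_left_half_pi
proof eventually_elim
  case (elim t)
  thus ?case using meridian_in_Sp_plus(1)[OF assms, of t] pi_gt_zero by linarith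
qed

lemma equator_in_closure:
  assumes "u \<in> equator b U"
  shows "u \<in> closure (Sp_plus b e0 U)" "u \<notin> Sp_plus b e0 U" "at u within Sp_plus b e0 U \<noteq> bot"
proof -
  have "eventually (\<lambda>t. sin t *\<^sub>R u + cos t *\<^sub>R e0 \<in> closure (Sp_plus b e0 U)) (at_left (pi / 2))"
    using eventually_meridian_in_Sp_plus[OF assms] by eventually_elim (use closure_subset in blast)
  thus closure: "u \<in> closure (Sp_plus b e0 U)"
    using Lim_in_closed_set[OF closed_closure _ _ tendsto_great_circle_at_left] by simp
  show notin: "u \<notin> Sp_plus b e0 U" using assms Sp_plus_iff height_U by (simp add: equator_def)
  show "at u within Sp_plus b e0 U \<noteq> bot"
    using closure notin by (simp add: closure_def trivial_limit_within)
qed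

lemma isotropic_decomposition:
  assumes "v \<noteq> 0" "b v v = 0"
  obtains c u0 w0 where "c > 0" "u0 \<in> equator b U" "w0 \<in> Sq b e0 V" "v = c *\<^sub>R (u0 + w0)"
proof -
  have split: "b (pU v) (pU v) + b (pW v) (pW v) = 0" using b_decompose[of v v] assms(2) by simp
  have "pU v \<noteq> 0"
  proof
    assume "pU v = 0"
    hence "pW v = 0" using split W_isotropic_eq_0[OF pW_in_W] by (simp add: bilinear_simps)
    thus False using \<open>pU v = 0\<close> pU_pW[of v] assms(1) by simp
  qed
  hence pos: "b (pU v) (pU v) > 0" using U_pos pU_in_U by blast
  define c where "c = sqrt (b (pU v) (pU v))"
  have c: "c > 0" "c * c = b (pU v) (pU v)" using pos by (auto simp: c_def)
  have "(1 / c) *\<^sub>R pU v \<in> equator b U"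
    using c U_scale[OF pU_in_U] by (auto simp: equator_def bilinear_simps)
  moreover have "(1 / c) *\<^sub>R pW v \<in> Sq b e0 V"
  proof -
    have "b (pW v) (pW v) = - (c * c)" using split c(2) by simp
    thus ?thesis using c(1) W_scale[OF pW_in_W] unfolding Sq_iff by (simp add: bilinear_simps)
  qed
  moreover have "v = c *\<^sub>R ((1 / c) *\<^sub>R pU v + (1 / c) *\<^sub>R pW v)"
    using c(1) pU_pW[of v] by (simp add: scaleR_add_right[symmetric])
  ultimately show ?thesis using that c(1) by blast
qed

end

section \<open>Entire graphs: achronality and lightlike lines\<close>

locale entire_graph = fermi_frame +
  fixes \<phi> :: "'a \<Rightarrow> 'a"
  assumes graph_map: "graph_map b e0 U V \<phi>"
begin

abbreviation (input) "\<M> \<equiv> graph_of b e0 U \<phi>"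

lemma \<phi>_in_Sq: "u \<in> Sp_plus b e0 U \<Longrightarrow> \<phi> u \<in> Sq b e0 V"
  using graph_map by (auto simp: graph_map_def)

lemma \<phi>_in_W: "u \<in> Sp_plus b e0 U \<Longrightarrow> \<phi> u \<in> W"
  using \<phi>_in_Sq Sq_iff by blast

lemma \<phi>_lip: "u \<in> Sp_plus b e0 U \<Longrightarrow> v \<in> Sp_plus b e0 U \<Longrightarrow> ipS b e0 u v \<le> ipW b (\<phi> u) (\<phi> v)"
  using graph_map lip1_iff[of \<phi> "Sp_plus b e0 U"] \<phi>_in_Sq by (auto simp: graph_map_def)

lemma Psi_in_graph: "u \<in> Sp_plus b e0 U \<Longrightarrow> Psi b e0 u (\<phi> u) \<in> \<M>"
  by (auto simp: graph_of_def)

lemma graph_quadric: "P \<in> \<M> \<Longrightarrow> b P P = -1"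
  using Psi_quadric \<phi>_in_Sq by (auto simp: graph_of_def)

lemma mem_graph_iff: "P \<in> \<M> \<longleftrightarrow> b P P = -1 \<and> \<phi> (base P) = fibre P"
proof
  assume "P \<in> \<M>"
  then obtain u where "u \<in> Sp_plus b e0 U" "P = Psi b e0 u (\<phi> u)" by (auto simp: graph_of_def)
  thus "b P P = -1 \<and> \<phi> (base P) = fibre P"
    using Psi_quadric base_Psi fibre_Psi \<phi>_in_Sq \<phi>_in_W by simp
next
  assume "b P P = -1 \<and> \<phi> (base P) = fibre P"
  thus "P \<in> \<M>" using Psi_base_fibre[of P] Psi_in_graph[OF base_in_Sp_plus, of P] by simp
qed

lemma graph_achronal: assumes "P \<in> \<M>" "Q \<in> \<M>" shows "b P Q \<le> -1"
proof -
  obtain u v where "u \<in> Sp_plus b e0 U" "v \<in> Sp_plus b e0 U" "P = Psi b e0 u (\<phi> u)" "Q = Psi b e0 v (\<phi> v)"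
    using assms by (auto simp: graph_of_def)
  thus ?thesis using b_Psi_le_iff \<phi>_in_W \<phi>_lip by simp
qed

definition lift :: "'a \<Rightarrow> 'a" where "lift x = pU x + radius x *\<^sub>R \<phi> (base x)"

lemma lift_eq_Psi: "lift x = Psi b e0 (base x) (\<phi> (base x))"
  using radius_pos[of x]
  by (simp add: lift_def Psi_eq[OF base_in_Sp_plus] height_base horizontal_base scaleR_add_right)

lemma lift_in_graph: "lift x \<in> \<M>"
  using lift_eq_Psi Psi_in_graph base_in_Sp_plus by simp

lemma pU_lift: "pU (lift x) = pU x"
  using \<phi>_in_W[OF base_in_Sp_plus]
  by (simp add: lift_def linear_add[OF linear_pU] linear_scale[OF linear_pU] pU_U[OF pU_in_U] pU_W)

lemma \<phi>_norm_lipschitz: "\<exists>C>0. \<forall>u\<in>Sp_plus b e0 U. \<forall>v\<in>Sp_plus b e0 U. norm (\<phi> u - \<phi> v) \<le> C * norm (u - v)"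
proof -
  obtain C where C: "C > 0" "\<And>x. (norm x)\<^sup>2 \<le> C * euclid x x" using norm_le_euclid by blast
  obtain K where K: "K > 0" "\<And>x. euclid x x \<le> K * (norm x)\<^sup>2" using euclid_le_norm by blast
  have "norm (\<phi> u - \<phi> v) \<le> sqrt (C * K) * norm (u - v)"
    if uv: "u \<in> Sp_plus b e0 U" "v \<in> Sp_plus b e0 U" for u v
  proof -
    have "euclid (\<phi> u - \<phi> v) (\<phi> u - \<phi> v) = 2 - 2 * ipW b (\<phi> u) (\<phi> v)"
      using euclid_dist_units euclid_Sq euclid_Sq_unit \<phi>_in_Sq uv by simp
    also have "\<dots> \<le> 2 - 2 * ipS b e0 u v" using \<phi>_lip[OF uv] by simp
    also have "\<dots> = euclid (u - v) (u - v)"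
      using euclid_dist_units euclid_Sp_plus euclid_Sp_plus_unit uv by simp
    finally have "euclid (\<phi> u - \<phi> v) (\<phi> u - \<phi> v) \<le> euclid (u - v) (u - v)" .
    hence "C * euclid (\<phi> u - \<phi> v) (\<phi> u - \<phi> v) \<le> C * (K * (norm (u - v))\<^sup>2)"
      using C(1) K(2)[of "u - v"] by (meson less_imp_le mult_left_mono order_trans)
    hence "(norm (\<phi> u - \<phi> v))\<^sup>2 \<le> C * (K * (norm (u - v))\<^sup>2)"
      using C(2) order_trans by blast
    also have "\<dots> = (sqrt (C * K) * norm (u - v))\<^sup>2" using C(1) K(1) by (simp add: power_mult_distrib)
    finally show ?thesis by (rule power2_le_imp_le) (use C(1) K(1) in simp)
  qed
  thus ?thesis using C(1) K(1) by (intro exI[of _ "sqrt (C * K)"]) auto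
qed

lemma uniformly_continuous_\<phi>: "uniformly_continuous_on (Sp_plus b e0 U) \<phi>"
proof -
  obtain C where "C > 0" "\<forall>u\<in>Sp_plus b e0 U. \<forall>v\<in>Sp_plus b e0 U. norm (\<phi> u - \<phi> v) \<le> C * norm (u - v)"
    using \<phi>_norm_lipschitz by blast
  hence "C-lipschitz_on (Sp_plus b e0 U) \<phi>" by (auto simp: lipschitz_on_def dist_norm)
  thus ?thesis by (rule lipschitz_on_uniformly_continuous)
qed

lemma continuous_on_lift: "continuous_on S lift"
proof -
  have "continuous_on S (\<phi> \<circ> base)"
    using continuous_on_compose[OF continuous_on_base
        continuous_on_subset[OF uniformly_continuous_imp_continuous[OF uniformly_continuous_\<phi>]]]
      base_in_Sp_plus by blast
  thus ?thesis unfolding lift_def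
    by (intro continuous_intros continuous_on_pU continuous_on_radius) (simp add: o_def)
qed

lemma orthogonal_if_line_in_graph:
  assumes "\<And>t. P + t *\<^sub>R v \<in> \<M>" "Q \<in> \<M>" shows "b Q v = 0"
proof (rule ccontr)
  assume "b Q v \<noteq> 0"
  \<comment> \<open>then some point of the line is \<open>b\<close>-orthogonal to \<open>Q\<close>, against achronality\<close>
  hence "b Q (P + (- b Q P / b Q v) *\<^sub>R v) = 0" by (simp add: bilinear_simps)
  thus False using graph_achronal[OF assms(2) assms(1)[of "- b Q P / b Q v"]] by simp
qed

lemma graph_translation_invariant:
  assumes line: "\<And>t. P + t *\<^sub>R v \<in> \<M>" and isotropic: "b v v = 0" and Q: "Q \<in> \<M>"
  shows "Q + s *\<^sub>R v \<in> \<M>"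
proof -
  let ?X = "Q + s *\<^sub>R v"
  have Qv: "b Q v = 0" using orthogonal_if_line_in_graph[OF line Q] .
  have X: "b ?X ?X = -1"
    using graph_quadric[OF Q] Qv isotropic by (simp add: bilinear_simps commute[of v Q])
  have "b ?X (lift ?X) = b Q (lift ?X)"
    using orthogonal_if_line_in_graph[OF line lift_in_graph] by (simp add: bilinear_simps commute[of v])
  hence "b ?X (lift ?X) \<le> -1" using graph_achronal[OF Q lift_in_graph] by simp
  hence "?X = lift ?X"
    using eq_if_achronal_same_pU[OF X graph_quadric[OF lift_in_graph]] pU_lift by simp
  thus ?thesis using lift_in_graph by metis
qed

lemma contains_lightlike_geodesic_iff_line:
  "contains_lightlike_geodesic b \<M> \<longleftrightarrow> (\<exists>P v. v \<noteq> 0 \<and> b v v = 0 \<and> (\<forall>t. P + t *\<^sub>R v \<in> \<M>))"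
proof
  assume "contains_lightlike_geodesic b \<M>"
  then obtain \<gamma> where "complete_lightlike_geodesic b \<gamma>" "range \<gamma> \<subseteq> \<M>"
    by (auto simp: contains_lightlike_geodesic_def)
  moreover obtain P v where "v \<noteq> 0" "b v v = 0" "\<gamma> = (\<lambda>t. P + t *\<^sub>R v)"
    using \<open>complete_lightlike_geodesic b \<gamma>\<close> unfolding complete_lightlike_geodesic_iff by blast
  ultimately show "\<exists>P v. v \<noteq> 0 \<and> b v v = 0 \<and> (\<forall>t. P + t *\<^sub>R v \<in> \<M>)" by blast
next
  assume "\<exists>P v. v \<noteq> 0 \<and> b v v = 0 \<and> (\<forall>t. P + t *\<^sub>R v \<in> \<M>)"
  then obtain P v where Pv: "v \<noteq> 0" "b v v = 0" "\<And>t. P + t *\<^sub>R v \<in> \<M>" by blast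
  have "b P P = -1" "b P v = 0"
    using graph_quadric[OF Pv(3)[of 0]] orthogonal_if_line_in_graph[OF Pv(3) Pv(3)[of 0]] by simp_all
  hence "complete_lightlike_geodesic b (\<lambda>t. P + t *\<^sub>R v)"
    using Pv unfolding complete_lightlike_geodesic_iff by blast
  thus "contains_lightlike_geodesic b \<M>"
    using Pv(3) by (auto simp: contains_lightlike_geodesic_def)
qed

lemma contains_lightlike_geodesic_iff_foliated:
  "contains_lightlike_geodesic b \<M> \<longleftrightarrow> foliated_by_lightlike_geodesics b \<M>"
proof
  assume "contains_lightlike_geodesic b \<M>"
  then obtain P v where Pv: "v \<noteq> 0" "b v v = 0" "\<And>t. P + t *\<^sub>R v \<in> \<M>"
    using contains_lightlike_geodesic_iff_line by blast
  have geodesic: "complete_lightlike_geodesic b (\<lambda>t. Q + t *\<^sub>R v)" if "Q \<in> \<M>" for Q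
  proof -
    have "b Q Q = -1" "b Q v = 0"
      using graph_quadric[OF that] orthogonal_if_line_in_graph[OF Pv(3) that] by auto
    thus ?thesis using Pv(1,2) unfolding complete_lightlike_geodesic_iff by blast
  qed
  note partition = parallel_lines_partition[OF graph_translation_invariant[OF Pv(3) Pv(2)]]
  have leaves: "\<forall>L\<in>(\<lambda>Q. range (\<lambda>t. Q + t *\<^sub>R v)) ` \<M>.
      \<exists>\<gamma>. complete_lightlike_geodesic b \<gamma> \<and> L = range \<gamma>"
    using geodesic by blast
  show "foliated_by_lightlike_geodesics b \<M>"
    unfolding foliated_by_lightlike_geodesics_def
    by (intro exI[of _ "(\<lambda>Q. range (\<lambda>t. Q + t *\<^sub>R v)) ` \<M>"] conjI leaves partition)
next
  assume "foliated_by_lightlike_geodesics b \<M>"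
  then obtain F where F: "\<forall>L\<in>F. \<exists>\<gamma>. complete_lightlike_geodesic b \<gamma> \<and> L = range \<gamma>" "\<Union>F = \<M>"
    by (auto simp: foliated_by_lightlike_geodesics_def)
  have "\<M> \<noteq> {}" using Psi_in_graph[OF e0_Sp_plus] by blast
  then obtain L where L: "L \<in> F" using F(2) by blast
  then obtain \<gamma> where "complete_lightlike_geodesic b \<gamma>" "L = range \<gamma>" using F(1) by blast
  moreover have "L \<subseteq> \<M>" using F(2) L by blast
  ultimately show "contains_lightlike_geodesic b \<M>" unfolding contains_lightlike_geodesic_def by blast
qed

subsection \<open>The asymptotic boundary\<close>

lemma tendsto_ext_map:
  assumes "u \<in> equator b U"
  shows "(\<phi> \<longlongrightarrow> ext_map b e0 U \<phi> u) (at u within Sp_plus b e0 U)"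
proof -
  note u = equator_in_closure[OF assms]
  obtain l where l: "(\<phi> \<longlongrightarrow> l) (at u within Sp_plus b e0 U)"
    using uniformly_continuous_on_extension_at_closure[OF uniformly_continuous_\<phi> u(1)] by blast
  hence "ext_map b e0 U \<phi> u = l" using u(2,3) tendsto_Lim by (simp add: ext_map_def)
  thus ?thesis using l by simp
qed

lemma ext_map_in_Sq: "u \<in> equator b U \<Longrightarrow> ext_map b e0 U \<phi> u \<in> Sq b e0 V"
  using Lim_in_closed_set[OF closed_Sq _ equator_in_closure(3) tendsto_ext_map] \<phi>_in_Sq
  by (auto simp: eventually_at_filter)

lemma ext_map_lip:
  assumes u: "u \<in> equator b U" and y: "y \<in> Sp_plus b e0 U"
  shows "ipS b e0 y u \<le> ipW b (\<phi> y) (ext_map b e0 U \<phi> u)"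
proof (rule tendsto_le[OF equator_in_closure(3)[OF u]])
  show "((\<lambda>z. ipW b (\<phi> y) (\<phi> z)) \<longlongrightarrow> ipW b (\<phi> y) (ext_map b e0 U \<phi> u)) (at u within Sp_plus b e0 U)"
    unfolding ipW_def by (intro tendsto_intros tendsto tendsto_ext_map[OF u])
  show "((\<lambda>z. ipS b e0 y z) \<longlongrightarrow> ipS b e0 y u) (at u within Sp_plus b e0 U)"
    unfolding ipS_def by (intro tendsto_intros tendsto)
  show "eventually (\<lambda>z. ipS b e0 y z \<le> ipW b (\<phi> y) (\<phi> z)) (at u within Sp_plus b e0 U)"
    using \<phi>_lip y by (auto simp: eventually_at_filter)
qed

lemma ext_map_eqI_meridian:
  assumes u: "u \<in> equator b U"
    and meridian: "\<And>t. - (pi / 2) < t \<Longrightarrow> t < pi / 2 \<Longrightarrow>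
      \<phi> (sin t *\<^sub>R u + cos t *\<^sub>R e0) = sin t *\<^sub>R w + cos t *\<^sub>R z"
  shows "ext_map b e0 U \<phi> u = w"
proof -
  let ?g = "\<lambda>t. sin t *\<^sub>R u + cos t *\<^sub>R e0"
  have "eventually (\<lambda>t. ?g t \<in> Sp_plus b e0 U - {u}) (at_left (pi / 2))"
    using eventually_meridian_in_Sp_plus[OF u] by eventually_elim (use equator_in_closure(2)[OF u] in auto)
  hence "filterlim ?g (at u within Sp_plus b e0 U) (at_left (pi / 2))"
    using tendsto_great_circle_at_left filterlim_at by fastforce
  hence "((\<lambda>t. \<phi> (?g t)) \<longlongrightarrow> ext_map b e0 U \<phi> u) (at_left (pi / 2))"
    using filterlim_compose[OF tendsto_ext_map[OF u]] by blast
  moreover have "((\<lambda>t. \<phi> (?g t)) \<longlongrightarrow> w) (at_left (pi / 2))"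
  proof (rule Lim_transform_eventually[OF tendsto_great_circle_at_left])
    show "eventually (\<lambda>t. sin t *\<^sub>R w + cos t *\<^sub>R z = \<phi> (?g t)) (at_left (pi / 2))"
      using eventually_at_left_half_pi by eventually_elim (use meridian in auto)
  qed
  ultimately show ?thesis by (rule tendsto_unique[OF trivial_limit_at_left_real])
qed

lemma lightlike_line_of_meridian:
  assumes u: "u \<in> equator b U" and w: "w \<in> Sq b e0 V" and z: "z \<in> W"
    and meridian: "\<And>t. - (pi / 2) < t \<Longrightarrow> t < pi / 2 \<Longrightarrow>
      \<phi> (sin t *\<^sub>R u + cos t *\<^sub>R e0) = sin t *\<^sub>R w + cos t *\<^sub>R z"
  shows "contains_lightlike_geodesic b \<M>"
proof -
  have uU: "u \<in> U" "b u u = 1" and ww: "w \<in> W" "b w w = -1"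
    using u w Sq_iff by (auto simp: equator_def)
  \<comment> \<open>in the chart, the meridian through \<open>u\<close> is the lightlike line \<open>z + r (u + w)\<close> with \<open>r = tan t\<close>\<close>
  have "z + r *\<^sub>R (u + w) \<in> \<M>" for r
  proof -
    define t where "t = arctan r"
    have t: "- (pi / 2) < t" "t < pi / 2" using arctan_bounded t_def by auto
    note g = meridian_in_Sp_plus[OF u t]
    have "Psi b e0 (sin t *\<^sub>R u + cos t *\<^sub>R e0) (\<phi> (sin t *\<^sub>R u + cos t *\<^sub>R e0))
        = (1 / cos t) *\<^sub>R (sin t *\<^sub>R u + (sin t *\<^sub>R w + cos t *\<^sub>R z))"
      using Psi_eq[OF g(1)] g(2,3) meridian[OF t] by simp
    also have "\<dots> = z + (sin t / cos t) *\<^sub>R (u + w)"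
      using cos_gt_zero_pi[OF t] by (simp add: scaleR_add_right algebra_simps)
    also have "sin t / cos t = r" using tan_arctan[of r] by (simp add: t_def tan_def)
    finally show ?thesis using Psi_in_graph[OF g(1)] by simp
  qed
  moreover have "u + w \<noteq> 0" using equator_add_W_nonzero[OF u ww(1)] .
  moreover have "b (u + w) (u + w) = 0"
    using U_W[OF uU(1) ww(1)] W_U[OF uU(1) ww(1)] uU ww by (simp add: bilinear_simps)
  ultimately show ?thesis using contains_lightlike_geodesic_iff_line by blast
qed

lemma antipodal_boundary_points:
  assumes "\<not> admissible (asym_boundary b e0 U \<phi>)"
  obtains u where "u \<in> equator b U" "ext_map b e0 U \<phi> (- u) = - ext_map b e0 U \<phi> u"
proof -
  obtain x u1 u2 where x: "x \<noteq> 0" "u1 \<in> equator b U" "ray x = ray (u1 + ext_map b e0 U \<phi> u1)"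
    "u2 \<in> equator b U" "ray (- x) = ray (u2 + ext_map b e0 U \<phi> u2)"
    using assms by (auto simp: admissible_def asym_boundary_def)
  define e1 where "e1 = ext_map b e0 U \<phi> u1"
  define e2 where "e2 = ext_map b e0 U \<phi> u2"
  have u: "u1 \<in> U" "b u1 u1 = 1" "u2 \<in> U" "b u2 u2 = 1" using x by (auto simp: equator_def)
  have e: "e1 \<in> W" "e2 \<in> W" using ext_map_in_Sq x Sq_iff by (auto simp: e1_def e2_def)
  obtain c1 c2 where c: "c1 > 0" "u1 + e1 = c1 *\<^sub>R x" "c2 > 0" "u2 + e2 = c2 *\<^sub>R (- x)"
    using ray_eq_imp_pos_multiple[OF x(3)[folded e1_def] equator_add_W_nonzero[OF x(2) e(1)]]
      ray_eq_imp_pos_multiple[OF x(5)[folded e2_def] equator_add_W_nonzero[OF x(4) e(2)]] by blast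
  define c where "c = c2 / c1"
  have "c *\<^sub>R (u1 + e1) = - (u2 + e2)" using c by (simp add: c_def)
  hence "c *\<^sub>R u1 + c *\<^sub>R e1 = (- u2) + (- e2)" by (simp add: scaleR_add_right)
  hence split: "c *\<^sub>R u1 = - u2" "c *\<^sub>R e1 = - e2"
    using U_W_unique[of "c *\<^sub>R u1" "c *\<^sub>R e1" "- u2" "- e2"] u e U_scale W_scale U_neg W_neg by auto
  have "c\<^sup>2 = 1"
    using arg_cong[OF split(1), of "\<lambda>y. b y y"] u by (simp add: bilinear_simps power2_eq_square)
  moreover have "c > 0" using c by (simp add: c_def)
  ultimately have "c = 1" using power2_eq_1_iff[of c] by auto
  hence "u2 = - u1" "e2 = - e1" using split by auto
  thus ?thesis using that x(2) by (simp add: e1_def e2_def)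
qed

lemma euclid_meridian_ext_map:
  assumes u: "u \<in> equator b U" and antipodal: "ext_map b e0 U \<phi> (- u) = - ext_map b e0 U \<phi> u"
    and t: "- (pi / 2) < t" "t < pi / 2"
  shows "euclid (\<phi> (sin t *\<^sub>R u + cos t *\<^sub>R e0)) (ext_map b e0 U \<phi> u) = sin t"
proof -
  let ?g = "sin t *\<^sub>R u + cos t *\<^sub>R e0" and ?e = "ext_map b e0 U \<phi> u"
  have mu: "- u \<in> equator b U" using u U_neg by (auto simp: equator_def bilinear_simps)
  note g = meridian_in_Sp_plus(1)[OF u t]
  have ipS_g: "ipS b e0 ?g u = sin t"
    using u by (auto simp: equator_def ipS_def bilinear_simps e0_e0 e0_U U_e0)
  \<comment> \<open>the Lipschitz bounds against \<open>u\<close> and \<open>-u\<close> are opposite inequalities\<close>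
  have "sin t \<le> ipW b (\<phi> ?g) ?e" using ext_map_lip[OF u g] ipS_g by simp
  moreover have "- sin t \<le> - ipW b (\<phi> ?g) ?e"
    using ext_map_lip[OF mu g] ipS_g antipodal by (simp add: ipW_def ipS_def bilinear_simps)
  ultimately show ?thesis using euclid_Sq[OF \<phi>_in_Sq[OF g] ext_map_in_Sq[OF u]] by simp
qed

lemma meridian_of_antipodal_boundary_points:
  assumes u: "u \<in> equator b U" and antipodal: "ext_map b e0 U \<phi> (- u) = - ext_map b e0 U \<phi> u"
    and t: "- (pi / 2) < t" "t < pi / 2"
  shows "\<phi> (sin t *\<^sub>R u + cos t *\<^sub>R e0) = sin t *\<^sub>R ext_map b e0 U \<phi> u + cos t *\<^sub>R \<phi> e0"
proof -
  define e where "e = ext_map b e0 U \<phi> u"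
  define g where "g t = sin t *\<^sub>R u + cos t *\<^sub>R e0" for t
  define z where "z s = (1 / cos s) *\<^sub>R (\<phi> (g s) - sin s *\<^sub>R e)" for s
  have e: "euclid e e = 1" using euclid_Sq_unit[OF ext_map_in_Sq[OF u]] by (simp add: e_def)
  have g: "g s \<in> Sp_plus b e0 U" if "- (pi / 2) < s" "s < pi / 2" for s
    using meridian_in_Sp_plus(1)[OF u that] by (simp add: g_def)
  have z: "euclid (z s) (z s) = 1" "euclid (z s) e = 0" if s: "- (pi / 2) < s" "s < pi / 2" for s
    using euclid_unit_orthogonal_part[OF euclid_Sq_unit[OF \<phi>_in_Sq[OF g[OF s]]] e]
      euclid_meridian_ext_map[OF u antipodal s] cos_gt_zero_pi[OF s]
    by (simp_all add: z_def g_def e_def)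
  have \<phi>_g: "\<phi> (g s) = sin s *\<^sub>R e + cos s *\<^sub>R z s" if "- (pi / 2) < s" "s < pi / 2" for s
    using cos_gt_zero_pi[OF that] by (simp add: z_def)
  have t0: "- (pi / 2) < (0::real)" "(0::real) < pi / 2" by simp_all
  \<comment> \<open>the Lipschitz bound against \<open>e0\<close> forces the component \<open>z\<close> orthogonal to \<open>e\<close> to be constant\<close>
  have "ipS b e0 (g t) (g 0) = cos t"
    using u by (auto simp: g_def equator_def ipS_def bilinear_simps e0_e0 e0_U U_e0)
  hence "cos t * 1 \<le> euclid (\<phi> (g t)) (\<phi> (g 0))"
    using \<phi>_lip[OF g[OF t] g[OF t0]] euclid_Sq[OF \<phi>_in_Sq[OF g[OF t]] \<phi>_in_Sq[OF g[OF t0]]] by simp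
  also have "\<dots> = cos t * euclid (z t) (z 0)"
    using \<phi>_g[OF t] \<phi>_g[OF t0] z(2)[OF t0] by (simp add: euclid_simps euclid_sym[of e "z 0"])
  finally have "euclid (z t) (z 0) \<ge> 1" using cos_gt_zero_pi[OF t] by (simp add: mult_le_cancel_left)
  hence "z t = z 0" using euclid_eq_if_ge_1 z(1)[OF t] z(1)[OF t0] by blast
  moreover have "z 0 = \<phi> e0" by (simp add: z_def g_def)
  ultimately have "\<phi> (g t) = sin t *\<^sub>R e + cos t *\<^sub>R \<phi> e0" using \<phi>_g[OF t] by simp
  thus ?thesis by (simp add: g_def e_def)
qed

lemma contains_lightlike_geodesic_if_not_admissible:
  assumes "\<not> admissible (asym_boundary b e0 U \<phi>)"
  shows "contains_lightlike_geodesic b \<M>"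
proof -
  obtain u where "u \<in> equator b U" "ext_map b e0 U \<phi> (- u) = - ext_map b e0 U \<phi> u"
    using antipodal_boundary_points[OF assms] by blast
  thus ?thesis
    using lightlike_line_of_meridian[OF _ ext_map_in_Sq \<phi>_in_W[OF e0_Sp_plus]]
      meridian_of_antipodal_boundary_points by blast
qed

subsection \<open>The split form\<close>

lemma invariant_direction_of_lightlike_line:
  assumes v: "v \<noteq> 0" "b v v = 0" "\<And>t. P + t *\<^sub>R v \<in> \<M>"
  obtains u0 w0 where "u0 \<in> equator b U" "w0 \<in> Sq b e0 V"
    "\<And>Q t. Q \<in> \<M> \<Longrightarrow> Q + t *\<^sub>R (u0 + w0) \<in> \<M>"
proof -
  obtain c u0 w0 where c: "c > 0" "u0 \<in> equator b U" "w0 \<in> Sq b e0 V" "v = c *\<^sub>R (u0 + w0)"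
    using isotropic_decomposition[OF v(1,2)] by blast
  have "Q + t *\<^sub>R (u0 + w0) \<in> \<M>" if "Q \<in> \<M>" for Q t
    using graph_translation_invariant[OF v(3) v(2) that, of "t / c"] c(1,4) by simp
  thus ?thesis using that c(2,3) by blast
qed

lemma \<phi>_orthogonal_if_invariant:
  assumes u0: "u0 \<in> equator b U" and w0: "w0 \<in> W"
    and invariant: "\<And>Q t. Q \<in> \<M> \<Longrightarrow> Q + t *\<^sub>R (u0 + w0) \<in> \<M>"
    and x: "x \<in> Sp_plus b e0 U" "ipS b e0 u0 x = 0"
  shows "b w0 (\<phi> x) = 0"
proof -
  have u0U: "u0 \<in> U" using u0 by (simp add: equator_def)
  have "b (Psi b e0 x (\<phi> x)) (u0 + w0) = 0"
    using orthogonal_if_line_in_graph[OF invariant Psi_in_graph] Psi_in_graph x(1) by blast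
  moreover have "b (Psi b e0 x (\<phi> x)) (u0 + w0) = b w0 (\<phi> x) / height x"
    using Psi_eq[OF x(1)] x(2) ipS_U[OF u0U] U_W[OF Sp_plusD(1)[OF x(1)] w0]
      W_U[OF u0U \<phi>_in_W[OF x(1)]] commute[of "horizontal x" u0] commute[of w0 "\<phi> x"]
    by (simp add: bilinear_simps)
  ultimately show ?thesis using Sp_plusD(3)[OF x(1)] by simp
qed

text \<open>Translation along \<open>u0 + w0\<close> acts in the chart by rotating the hemisphere towards \<open>u0\<close>
  and \<open>S^q\<close> towards \<open>w0\<close>.\<close>
lemma \<phi>_rotation_if_invariant:
  assumes u0: "u0 \<in> equator b U" and w0: "w0 \<in> Sq b e0 V"
    and invariant: "\<And>Q t. Q \<in> \<M> \<Longrightarrow> Q + t *\<^sub>R (u0 + w0) \<in> \<M>"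
    and t: "- (pi / 2) < t" "t < pi / 2" and x: "x \<in> Sp_plus b e0 U" "ipS b e0 u0 x = 0"
  shows "\<phi> (sin t *\<^sub>R u0 + cos t *\<^sub>R x) = sin t *\<^sub>R w0 + cos t *\<^sub>R \<phi> x"
proof -
  let ?u = "sin t *\<^sub>R u0 + cos t *\<^sub>R x" and ?w = "sin t *\<^sub>R w0 + cos t *\<^sub>R \<phi> x"
  have u0U: "u0 \<in> U" "b u0 u0 = 1" and w0W: "w0 \<in> W" "b w0 w0 = -1"
    using u0 w0 Sq_iff by (auto simp: equator_def)
  have "b u0 (horizontal x) = 0" using x(2) ipS_U[OF u0U(1)] by simp
  note u = great_circle_in_Sp_plus[OF u0U x(1) this t]
  have \<phi>x: "\<phi> x \<in> W" "b (\<phi> x) (\<phi> x) = -1" using \<phi>_in_Sq[OF x(1)] Sq_iff by auto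
  have "?w \<in> W" using \<phi>x(1) w0W(1) W_add W_scale by blast
  moreover have "b ?w ?w = - ((sin t)\<^sup>2 + (cos t)\<^sup>2)"
    using w0W(2) \<phi>x(2) \<phi>_orthogonal_if_invariant[OF u0 w0W(1) invariant x] commute[of "\<phi> x" w0]
    by (simp add: bilinear_simps power2_eq_square algebra_simps)
  ultimately have w: "?w \<in> W" "?w \<in> Sq b e0 V" using Sq_iff by simp_all
  have ht: "cos t * height x > 0" using cos_gt_zero_pi[OF t] Sp_plusD(3)[OF x(1)] by simp
  have "Psi b e0 ?u ?w = (1 / (cos t * height x)) *\<^sub>R (sin t *\<^sub>R u0 + cos t *\<^sub>R horizontal x + ?w)"
    unfolding Psi_eq[OF u(1)] u(2,3) ..
  also have "\<dots> = Psi b e0 x (\<phi> x) + (sin t / (cos t * height x)) *\<^sub>R (u0 + w0)"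
    using ht Sp_plusD(3)[OF x(1)] cos_gt_zero_pi[OF t]
    by (simp add: Psi_eq[OF x(1)] scaleR_add_right algebra_simps)
  finally have "Psi b e0 ?u ?w \<in> \<M>" using invariant[OF Psi_in_graph[OF x(1)]] by simp
  thus ?thesis using mem_graph_iff base_Psi[OF u(1) w(1)] fibre_Psi[OF u(1) w(1)] by simp
qed

lemma split_form_if_contains_lightlike_geodesic:
  assumes "contains_lightlike_geodesic b \<M>" shows "split_form_in b e0 U V \<M>"
proof -
  obtain u0 w0 where u0: "u0 \<in> equator b U" and w0: "w0 \<in> Sq b e0 V"
    and invariant: "\<And>Q t. Q \<in> \<M> \<Longrightarrow> Q + t *\<^sub>R (u0 + w0) \<in> \<M>"
    using assms contains_lightlike_geodesic_iff_line invariant_direction_of_lightlike_line by metis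
  have orthogonal: "b w0 (\<phi> x) = 0" if "x \<in> Sp_plus b e0 U" "ipS b e0 u0 x = 0" for x
    using \<phi>_orthogonal_if_invariant[of u0 w0 x] u0 w0 invariant that Sq_iff by blast
  have rotation: "\<phi> (sin t *\<^sub>R u0 + cos t *\<^sub>R x) = sin t *\<^sub>R w0 + cos t *\<^sub>R \<phi> x"
    if "- (pi / 2) < t" "t < pi / 2" "x \<in> Sp_plus b e0 U" "ipS b e0 u0 x = 0" for t x
    using \<phi>_rotation_if_invariant[of u0 w0 t x] u0 w0 invariant that by blast
  let ?D = "{x \<in> Sp_plus b e0 U. ipS b e0 u0 x = 0}"
  have "\<phi> ` ?D \<subseteq> {w \<in> Sq b e0 V. ipW b w0 w = 0}"
    using orthogonal \<phi>_in_Sq by (auto simp: ipW_def)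
  moreover have "lip1 (ipS b e0) (ipW b) ?D \<phi>"
    using lip1_iff[of \<phi> ?D] \<phi>_in_Sq \<phi>_lip by auto
  ultimately show ?thesis unfolding split_form_in_def using graph_map u0 w0 rotation by blast
qed

lemma not_admissible_if_contains_lightlike_geodesic:
  assumes "contains_lightlike_geodesic b \<M>" shows "\<not> admissible (asym_boundary b e0 U \<phi>)"
proof -
  obtain u0 w0 where u0: "u0 \<in> equator b U" and w0: "w0 \<in> Sq b e0 V"
    and invariant: "\<And>Q t. Q \<in> \<M> \<Longrightarrow> Q + t *\<^sub>R (u0 + w0) \<in> \<M>"
    using assms contains_lightlike_geodesic_iff_line invariant_direction_of_lightlike_line by metis
  have rotation: "\<phi> (sin t *\<^sub>R u0 + cos t *\<^sub>R x) = sin t *\<^sub>R w0 + cos t *\<^sub>R \<phi> x"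
    if "- (pi / 2) < t" "t < pi / 2" "x \<in> Sp_plus b e0 U" "ipS b e0 u0 x = 0" for t x
    using \<phi>_rotation_if_invariant[of u0 w0 t x] u0 w0 invariant that by blast
  have mu0: "- u0 \<in> equator b U" using u0 U_neg by (simp add: equator_def bilinear_simps)
  have "ipS b e0 u0 e0 = 0" using u0 ipS_U by (simp add: equator_def horizontal_e0_0 bilinear_simps)
  hence meridian: "\<phi> (sin t *\<^sub>R u0 + cos t *\<^sub>R e0) = sin t *\<^sub>R w0 + cos t *\<^sub>R \<phi> e0"
    if "- (pi / 2) < t" "t < pi / 2" for t
    using rotation that e0_Sp_plus by blast
  have "ext_map b e0 U \<phi> u0 = w0" by (rule ext_map_eqI_meridian[OF u0 meridian])
  moreover have "ext_map b e0 U \<phi> (- u0) = - w0"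
  proof (rule ext_map_eqI_meridian[OF mu0])
    fix t :: real assume "- (pi / 2) < t" "t < pi / 2"
    thus "\<phi> (sin t *\<^sub>R (- u0) + cos t *\<^sub>R e0) = sin t *\<^sub>R (- w0) + cos t *\<^sub>R \<phi> e0"
      using meridian[of "- t"] by simp
  qed
  ultimately have "u0 + w0 = u0 + ext_map b e0 U \<phi> u0" "- (u0 + w0) = - u0 + ext_map b e0 U \<phi> (- u0)"
    by simp_all
  hence "ray (u0 + w0) \<in> asym_boundary b e0 U \<phi>" "ray (- (u0 + w0)) \<in> asym_boundary b e0 U \<phi>"
    unfolding asym_boundary_def using u0 mu0 by (metis (mono_tags, lifting) mem_Collect_eq)+
  moreover have "u0 + w0 \<noteq> 0" using equator_add_W_nonzero u0 w0 Sq_iff by blast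
  ultimately show ?thesis unfolding admissible_def by blast
qed

end

context fermi_frame
begin

lemma contains_lightlike_geodesic_if_split_form:
  assumes "split_form_in b e0 U V S" shows "contains_lightlike_geodesic b S"
proof -
  obtain \<phi> u0 w0 \<psi> where S: "graph_map b e0 U V \<phi>" "S = graph_of b e0 U \<phi>"
    "u0 \<in> equator b U" "w0 \<in> Sq b e0 V"
    "\<psi> ` {x \<in> Sp_plus b e0 U. ipS b e0 u0 x = 0} \<subseteq> {w \<in> Sq b e0 V. ipW b w0 w = 0}"
    "\<And>t x. - (pi / 2) < t \<Longrightarrow> t < pi / 2 \<Longrightarrow> x \<in> Sp_plus b e0 U \<Longrightarrow> ipS b e0 u0 x = 0 \<Longrightarrow>
       \<phi> (sin t *\<^sub>R u0 + cos t *\<^sub>R x) = sin t *\<^sub>R w0 + cos t *\<^sub>R \<psi> x"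
    using assms unfolding split_form_in_def by blast
  interpret entire_graph b p e0 U V \<phi> by unfold_locales (fact S(1))
  have "ipS b e0 u0 e0 = 0" using S(3) ipS_U by (simp add: equator_def horizontal_e0_0 bilinear_simps)
  hence "\<psi> e0 \<in> W" using S(5) e0_Sp_plus Sq_iff by blast
  thus ?thesis
    using lightlike_line_of_meridian[OF S(3,4)] S(2,6) e0_Sp_plus \<open>ipS b e0 u0 e0 = 0\<close> by blast
qed

end

section \<open>Independence of the Fermi chart\<close>

context entire_graph
begin

lemma entire_graph_in_other_frame:
  assumes "fermi_frame b p e1 U1 V1"
  shows "\<exists>\<phi>1. graph_map b e1 U1 V1 \<phi>1 \<and> graph_of b e1 U1 \<phi>1 = \<M>"
proof -
  interpret C: fermi_frame b p e1 U1 V1 by fact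
  define g where "g = C.pU \<circ> lift"
  have inj_pU: "P = Q" if "P \<in> \<M>" "Q \<in> \<M>" "C.pU P = C.pU Q" for P Q
    by (rule C.eq_if_achronal_same_pU) (simp_all add: graph_quadric graph_achronal that)
  have "inj_on g U"
  proof (rule inj_onI)
    fix x y assume "x \<in> U" "y \<in> U" "g x = g y"
    hence "lift x = lift y" using inj_pU lift_in_graph by (simp add: g_def)
    hence "pU (lift x) = pU (lift y)" by simp
    thus "x = y" using pU_lift[of x] pU_lift[of y] pU_U[OF \<open>x \<in> U\<close>] pU_U[OF \<open>y \<in> U\<close>] by simp
  qed
  moreover have cont: "continuous_on U g"
    unfolding g_def by (intro continuous_on_compose continuous_on_lift C.continuous_on_pU)
  moreover have "closed (g ` U)"
  proof (rule closed_image_if_bounded_sublevels[OF closed_subspace[OF subspace_U] cont])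
    fix r
    have "{x \<in> U. norm (g x) \<le> r} \<subseteq> pU ` {P. b P P = -1 \<and> norm (C.pU P) \<le> r}"
    proof
      fix x assume "x \<in> {x \<in> U. norm (g x) \<le> r}"
      hence "x = pU (lift x)" "b (lift x) (lift x) = -1" "norm (C.pU (lift x)) \<le> r"
        using pU_lift[of x] pU_U[of x] graph_quadric[OF lift_in_graph] by (auto simp: g_def)
      thus "x \<in> pU ` {P. b P P = -1 \<and> norm (C.pU P) \<le> r}" by blast
    qed
    moreover have "bounded (pU ` {P. b P P = -1 \<and> norm (C.pU P) \<le> r})"
      using bounded_linear_image[OF C.bounded_quadric_pU_sublevel] linear_pU
      by (simp add: linear_conv_bounded_linear)
    ultimately show "bounded {x \<in> U. norm (g x) \<le> r}" by (rule bounded_subset[rotated])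
  qed
  moreover have "g \<in> U \<rightarrow> U1" using C.pU_in_U by (simp add: g_def)
  ultimately have "g ` U = U1"
    using image_eq_if_closed_inj_on_subspace[OF subspace_U C.subspace_U] dim_U C.dim_U by simp
  hence "U1 \<subseteq> C.pU ` \<M>" using lift_in_graph by (auto simp: g_def)
  from C.graph_map_of_achronal[OF graph_quadric graph_achronal this] show ?thesis .
qed

lemma split_form_in_other_frame:
  assumes "contains_lightlike_geodesic b \<M>" "fermi_frame b p e1 U1 V1"
  shows "split_form_in b e1 U1 V1 \<M>"
proof -
  obtain \<phi>1 where \<phi>1: "graph_map b e1 U1 V1 \<phi>1" "graph_of b e1 U1 \<phi>1 = \<M>"
    using entire_graph_in_other_frame[OF assms(2)] by blast
  interpret G1: entire_graph b p e1 U1 V1 \<phi>1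
    using assms(2) \<phi>1(1) by (simp add: entire_graph_def entire_graph_axioms_def)
  show ?thesis using G1.split_form_if_contains_lightlike_geodesic assms(1) \<phi>1(2) by simp
qed

end

theorem mainTheorem13:
  fixes b :: "'a::euclidean_space \<Rightarrow> 'a \<Rightarrow> real" and p q :: nat
    and e0 :: 'a and U V M :: "'a set" and \<phi> :: "'a \<Rightarrow> 'a"
  assumes "DIM('a) = p + q + 1"
    and "symmetric_bilinear b"
    and "has_signature b p (q + 1)"
    and "entire_graph_in b p e0 U V \<phi> M"
  shows "(\<not> admissible (asym_boundary b e0 U \<phi>) \<longleftrightarrow> contains_lightlike_geodesic b M)
       \<and> (contains_lightlike_geodesic b M \<longleftrightarrow> foliated_by_lightlike_geodesics b M)
       \<and> (foliated_by_lightlike_geodesics b M \<longleftrightarrow>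
            (\<forall>e0' U' V'. fermi_chart b p e0' U' V' \<longrightarrow> split_form_in b e0' U' V' M))"
proof -
  have frame: "fermi_frame b p e0' U' V'" if "fermi_chart b p e0' U' V'" for e0' U' V'
    using assms(2,3) that
    by (simp add: fermi_frame_def fermi_frame_axioms_def symmetric_form_def has_signature_def)
  have chart: "fermi_chart b p e0 U V" and M: "M = graph_of b e0 U \<phi>"
    using assms(4) by (simp_all add: entire_graph_in_def)
  interpret entire_graph b p e0 U V \<phi>
    using frame[OF chart] assms(4) by (simp add: entire_graph_def entire_graph_axioms_def entire_graph_in_def)
  have "(\<forall>e0' U' V'. fermi_chart b p e0' U' V' \<longrightarrow> split_form_in b e0' U' V' M) \<longleftrightarrow>
      contains_lightlike_geodesic b M"
    using split_form_in_other_frame[OF _ frame] contains_lightlike_geodesic_if_split_form chart M by blast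
  thus ?thesis
    using contains_lightlike_geodesic_if_not_admissible not_admissible_if_contains_lightlike_geodesic
      contains_lightlike_geodesic_iff_foliated M by blast
qed

end
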